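(* Assume $\sigma e^{-a}>1$, fix $\theta\in\{\ell,K+1\}$ and $k\in\{1,\dots,K\}$, and consider the regime $\ell\to\infty$, $m\to\infty$, $q\to0$, $\ell q\to a$. Let $\delta>0$. There exist positive reals $\alpha,\alpha',\beta,\beta'$ (depending on $\delta,\delta'$) such that for $\ell,m$ large enough and $q,\delta'$ small enough, for $Z^\bullet$ denoting either $Z^L$ or $Z^U$ and $\tau^\bullet(A)=\inf\{t\ge0:Z^\bullet_t\in A\}$: $$\forall i\in\{0,\dots,m\}\quad P\big(\tau^\bullet(V_k(\delta))\ge m^\alpha\mid Z^\bullet_0=i\big)\le\exp(-\alpha'm),$$ $$\forall i\in V_k(\delta)\quad P\big(\tau^\bullet(V_k(2\delta)^c)\le\exp(\beta m)\mid Z^\bullet_0=i\big)\le\exp(-\beta'm).$$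
   Context: Let $p=\kappa q/(\kappa-1)$ and $M_H(b,c)=\sum_{k'-l=c-b}\binom{\ell-b}{k'}\binom{b}{l}(p(1-1/\kappa))^{k'}(1-p(1-1/\kappa))^{\ell-b-k'}(p/\kappa)^l(1-p/\kappa)^{b-l}$ (sum over $0\le k'\le\ell-b$, $0\le l\le b$). Set $\varepsilon_\theta=0$ if $\theta=\ell$ and $\varepsilon_\theta=M_H(k+1,k)$ if $\theta=K+1$. Let $\rho^*_j=(\sigma e^{-a}-1)\frac{a^j}{j!}\sum_{i\ge1}i^j\sigma^{-i}$. For $\rho=(\rho_0,\dots,\rho_{k-1})\in[0,1]^k$, $S=\sum_{l<k}\rho_l$, $D(\rho)=(\sigma-1)\rho_0+1$, define $\delta_m(\rho)=0$, $\gamma_0(\rho)=0$ and $\delta_i(\rho)=\frac{1-i/m}{D(\rho)}\big(\sigma\rho_0M_H(0,k)+\sum_{l=1}^{k-1}\rho_lM_H(l,k)+\frac imM_H(k,k)+(1-S-\frac im)\varepsilon_\theta\big)$ for $0\le i<m$, $\gamma_i(\rho)=\frac{i/m}{D(\rho)}\big(\sigma\rho_0(1-M_H(0,k))+\sum_{l=1}^{k-1}\rho_l(1-M_H(l,k))+\frac im(1-M_H(k,k))+(1-S-\frac im)(1-\varepsilon_\theta)\big)$ for $0<i\le m$. For $\delta'>0$ let $W_{k-1}(2\delta')=\{\rho\in[0,1]^k:|\rho_i-\rho^*_i|<2\delta',\ 0\le i<k\}$ and set $\delta^L_i=\inf_{W_{k-1}(2\delta')}\delta_i$, $\gamma^L_i=\sup_{W_{k-1}(2\delta')}\gamma_i$,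 $\delta^U_i=\sup_{W_{k-1}(2\delta')}\delta_i$, $\gamma^U_i=\inf_{W_{k-1}(2\delta')}\gamma_i$. $Z^L$ (resp. $Z^U$) is the birth and death chain on $\{0,\dots,m\}$ moving from $i$ to $i+1$ with probability $\delta^L_i$ (resp. $\delta^U_i$), to $i-1$ with probability $\gamma^L_i$ (resp. $\gamma^U_i$), staying otherwise. $V_k(\delta)=\{i\in\{0,\dots,m\}:|i/m-\rho^*_k|<\delta\}$. *)

theory Defs
  imports "HOL-Analysis.Analysis"
begin

definition Mh :: "nat \<Rightarrow> real \<Rightarrow> real \<Rightarrow> nat \<Rightarrow> nat \<Rightarrow> real" where
  "Mh L \<kappa> q b c =
     (let p = \<kappa> * q / (\<kappa> - 1) in
      \<Sum>k'\<in>{0..L - b}. \<Sum>l\<in>{0..b}.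
        (if int k' - int l = int c - int b then
           real ((L - b) choose k') * (p * (1 - 1/\<kappa>)) ^ k' * (1 - p * (1 - 1/\<kappa>)) ^ (L - b - k')
           * real (b choose l) * (p / \<kappa>) ^ l * (1 - p / \<kappa>) ^ (b - l)
         else 0))"

datatype theta_mode = Theta_ell | Theta_Kplus1

definition eps_theta :: "nat \<Rightarrow> real \<Rightarrow> real \<Rightarrow> nat \<Rightarrow> theta_mode \<Rightarrow> real" where
  "eps_theta L \<kappa> q k th = (case th of Theta_ell \<Rightarrow> 0 | Theta_Kplus1 \<Rightarrow> Mh L \<kappa> q (k + 1) k)"

definition rho_star :: "real \<Rightarrow> real \<Rightarrow> nat \<Rightarrow> real" where
  "rho_star \<sigma> a j = (\<sigma> * exp (- a) - 1) * a ^ j / fact j * (\<Sum>i. real (Suc i) ^ j / \<sigma> ^ Suc i)"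

text \<open>delta_i(rho) and gamma_i(rho); rho is a vector (rho_0,...,rho_{k-1}), given as a function on nat.\<close>
definition delta_fn :: "real \<Rightarrow> real \<Rightarrow> nat \<Rightarrow> real \<Rightarrow> nat \<Rightarrow> nat \<Rightarrow> theta_mode \<Rightarrow> (nat \<Rightarrow> real) \<Rightarrow> nat \<Rightarrow> real" where
  "delta_fn \<sigma> \<kappa> L q m k th \<rho> i =
     (if i < m then
        (1 - real i / real m) / ((\<sigma> - 1) * \<rho> 0 + 1) *
        (\<sigma> * \<rho> 0 * Mh L \<kappa> q 0 k + (\<Sum>l\<in>{1..k-1}. \<rho> l * Mh L \<kappa> q l k)
         + real i / real m * Mh L \<kappa> q k k
         + (1 - (\<Sum>l<k. \<rho> l) - real i / real m) * eps_theta L \<kappa> q k th)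
      else 0)"

definition gamma_fn :: "real \<Rightarrow> real \<Rightarrow> nat \<Rightarrow> real \<Rightarrow> nat \<Rightarrow> nat \<Rightarrow> theta_mode \<Rightarrow> (nat \<Rightarrow> real) \<Rightarrow> nat \<Rightarrow> real" where
  "gamma_fn \<sigma> \<kappa> L q m k th \<rho> i =
     (if 0 < i then
        (real i / real m) / ((\<sigma> - 1) * \<rho> 0 + 1) *
        (\<sigma> * \<rho> 0 * (1 - Mh L \<kappa> q 0 k) + (\<Sum>l\<in>{1..k-1}. \<rho> l * (1 - Mh L \<kappa> q l k))
         + real i / real m * (1 - Mh L \<kappa> q k k)
         + (1 - (\<Sum>l<k. \<rho> l) - real i / real m) * (1 - eps_theta L \<kappa> q k th))
      else 0)"

definition Wset :: "real \<Rightarrow> real \<Rightarrow> nat \<Rightarrow> real \<Rightarrow> (nat \<Rightarrow> real) set" where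
  "Wset \<sigma> a k \<delta>' = {\<rho>. (\<forall>i<k. 0 \<le> \<rho> i \<and> \<rho> i \<le> 1 \<and> \<bar>\<rho> i - rho_star \<sigma> a i\<bar> < 2 * \<delta>') \<and> (\<forall>i\<ge>k. \<rho> i = 0)}"

definition deltaL where
  "deltaL \<sigma> a \<kappa> L q m k th \<delta>' i = Inf ((\<lambda>\<rho>. delta_fn \<sigma> \<kappa> L q m k th \<rho> i) ` Wset \<sigma> a k \<delta>')"
definition gammaL where
  "gammaL \<sigma> a \<kappa> L q m k th \<delta>' i = Sup ((\<lambda>\<rho>. gamma_fn \<sigma> \<kappa> L q m k th \<rho> i) ` Wset \<sigma> a k \<delta>')"
definition deltaU where
  "deltaU \<sigma> a \<kappa> L q m k th \<delta>' i = Sup ((\<lambda>\<rho>. delta_fn \<sigma> \<kappa> L q m k th \<rho> i) ` Wset \<sigma> a k \<delta>')"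
definition gammaU where
  "gammaU \<sigma> a \<kappa> L q m k th \<delta>' i = Inf ((\<lambda>\<rho>. gamma_fn \<sigma> \<kappa> L q m k th \<rho> i) ` Wset \<sigma> a k \<delta>')"

text \<open>Birth-death chain with up-probabilities up i, down-probabilities dn i, staying with
  probability 1 - up i - dn i. avoid_prob up dn A n i is the probability, starting from i,
  that Z_t is not in A for all t = 0,...,n-1 (first-step decomposition of the path law).\<close>
fun avoid_prob :: "(nat \<Rightarrow> real) \<Rightarrow> (nat \<Rightarrow> real) \<Rightarrow> nat set \<Rightarrow> nat \<Rightarrow> nat \<Rightarrow> real" where
  "avoid_prob up dn A 0 i = 1"
| "avoid_prob up dn A (Suc n) i =
     (if i \<in> A then 0
      else up i * avoid_prob up dn A n (Suc i) + dn i * avoid_prob up dn A n (i - 1)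
           + (1 - up i - dn i) * avoid_prob up dn A n i)"

text \<open>P(tau(A) >= T | Z_0 = i) for real T >= 0, with tau(A) = inf{t >= 0 : Z_t in A}.\<close>
definition prob_tau_ge :: "(nat \<Rightarrow> real) \<Rightarrow> (nat \<Rightarrow> real) \<Rightarrow> nat set \<Rightarrow> real \<Rightarrow> nat \<Rightarrow> real" where
  "prob_tau_ge up dn A T i = avoid_prob up dn A (nat \<lceil>T\<rceil>) i"

text \<open>P(tau(A) <= T | Z_0 = i) for real T >= 0.\<close>
definition prob_tau_le :: "(nat \<Rightarrow> real) \<Rightarrow> (nat \<Rightarrow> real) \<Rightarrow> nat set \<Rightarrow> real \<Rightarrow> nat \<Rightarrow> real" where
  "prob_tau_le up dn A T i = 1 - avoid_prob up dn A (nat \<lfloor>T\<rfloor> + 1) i"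

definition Zup where
  "Zup \<sigma> a \<kappa> L q m k th \<delta>' upper =
     (if upper then deltaU \<sigma> a \<kappa> L q m k th \<delta>' else deltaL \<sigma> a \<kappa> L q m k th \<delta>')"
definition Zdn where
  "Zdn \<sigma> a \<kappa> L q m k th \<delta>' upper =
     (if upper then gammaU \<sigma> a \<kappa> L q m k th \<delta>' else gammaL \<sigma> a \<kappa> L q m k th \<delta>')"

definition Vk :: "real \<Rightarrow> real \<Rightarrow> nat \<Rightarrow> nat \<Rightarrow> real \<Rightarrow> nat set" where
  "Vk \<sigma> a m k \<delta> = {i. i \<le> m \<and> \<bar>real i / real m - rho_star \<sigma> a k\<bar> < \<delta>}"

end

theory Submission
  imports Defs
begin

text \<open>Write \<open>x = i/m\<close>. In the regime \<open>\<ell> \<rightarrow> \<infinity>\<close>, \<open>q \<rightarrow> 0\<close>, \<open>\<ell> q \<rightarrow> a\<close> the weights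
  \<open>M\<^sub>H(l,k)\<close> tend to the Poisson weights \<open>e\<^sup>-\<^sup>a a\<^sup>k\<^sup>-\<^sup>l/(k-l)!\<close> and \<open>\<epsilon>\<^sub>\<theta>\<close> tends to \<open>0\<close>.
  By the fixed-point relation of \<open>\<rho>\<^sup>*\<close>, the up and down probabilities of \<open>Z\<^sup>L\<close> and \<open>Z\<^sup>U\<close> are then
  uniformly close to \<open>(1 - x) F(x)\<close> and \<open>x (1 - F(x))\<close>, where \<open>F(x) = (\<rho>\<^sup>*\<^sub>k (\<sigma> - 1) + x)/\<sigma>\<close>, so the
  drift \<open>F(x) - x = (\<sigma> - 1)(\<rho>\<^sup>*\<^sub>k - x)/\<sigma>\<close> pushes the chain towards \<open>\<rho>\<^sup>*\<^sub>k\<close> with some strength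
  \<open>\<mu> > 0\<close> outside \<open>V\<^sub>k(\<delta>)\<close>. For such a chain the Lyapunov function
  \<open>exp(\<mu>/2 (i - m(\<rho>\<^sup>*\<^sub>k + \<delta>))) + exp(\<mu>/2 (m(\<rho>\<^sup>*\<^sub>k - \<delta>) - i))\<close> shrinks in expectation by the
  factor \<open>1 - \<mu>\<^sup>2/8\<close> per step outside the window, so the chain enters \<open>V\<^sub>k(\<delta>)\<close> within \<open>m\<^sup>2\<close>
  steps except with probability \<open>e\<^sup>-\<^sup>m\<close>. The same function built on \<open>2\<delta>\<close> grows in expectation by
  at most \<open>2e\<^sup>-\<^sup>\<mu>\<^sup>\<delta>\<^sup>m\<^sup>/\<^sup>2\<close> per step and is at least \<open>1\<close> outside \<open>V\<^sub>k(2\<delta>)\<close>, so the chain leaves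
  \<open>V\<^sub>k(2\<delta>)\<close> within \<open>e\<^sup>\<mu>\<^sup>\<delta>\<^sup>m\<^sup>/\<^sup>8\<close> steps with probability at most \<open>e\<^sup>-\<^sup>\<mu>\<^sup>\<delta>\<^sup>m\<^sup>/\<^sup>4\<close>.\<close>

section \<open>Elementary exponential bounds\<close>

lemma power_div_fact_le_exp_minus_1:
  fixes x :: real assumes "0 \<le> x" "1 \<le> k"
  shows "x ^ k / fact k \<le> exp x - 1"
proof -
  have s: "summable (\<lambda>n. x^n /\<^sub>R fact n)" using exp_converges sums_summable by blast
  have "sum (\<lambda>n. x^n /\<^sub>R fact n) {0,k} \<le> (\<Sum>n. x^n /\<^sub>R fact n)"
    by (rule sum_le_suminf[OF s]) (use assms in auto)
  also have "\<dots> = exp x" using exp_converges sums_unique by metis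
  finally show ?thesis using assms by (simp add: divide_inverse mult.commute)
qed

lemma power_le_fact_mult_exp:
  fixes x :: real assumes "0 \<le> x"
  shows "x ^ k \<le> fact k * exp x"
proof (cases "k = 0")
  case True then show ?thesis using exp_ge_add_one_self[of x] assms by simp
next
  case False
  then have "x ^ k / fact k \<le> exp x" using power_div_fact_le_exp_minus_1[OF assms, of k] by simp
  then show ?thesis by (simp add: divide_le_eq mult.commute)
qed

lemma one_minus_power_le_exp: "0 \<le> q \<Longrightarrow> q \<le> 1 \<Longrightarrow> (1 - q) ^ n \<le> exp (- (real n * q))"
proof -
  assume q: "0 \<le> q" "q \<le> 1"
  have "(1 - q) ^ n \<le> exp (- q) ^ n" using q exp_ge_add_one_self[of "-q"] by (intro power_mono) auto
  also have "\<dots> = exp (- (real n * q))" using exp_of_nat_mult[of n "-q"] by simp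
  finally show ?thesis .
qed

lemma exp_le_one_minus_power:
  assumes "0 < q" "q \<le> 1/2"
  shows "exp (- (real n * q) - 2 * (real n * q) * q) \<le> (1 - q) ^ n"
proof -
  have "q \<le> (q + 2 * q\<^sup>2) * (1 - q)"
  proof -
    have "0 \<le> q\<^sup>2 * (1 - 2 * q)" using assms by simp
    then show ?thesis by (simp add: algebra_simps power2_eq_square power3_eq_cube)
  qed
  then have "q / (1 - q) \<le> q + 2 * q\<^sup>2" using assms by (simp add: divide_le_eq)
  moreover have "ln (1 / (1 - q)) \<le> 1 / (1 - q) - 1" using assms by (intro ln_le_minus_one) auto
  then have "- ln (1 - q) \<le> q / (1 - q)" using assms by (simp add: ln_div field_simps)
  ultimately have "exp (- q - 2 * q\<^sup>2) \<le> exp (ln (1 - q))" by simp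
  then have "exp (- q - 2 * q\<^sup>2) ^ n \<le> (1 - q) ^ n" using assms by (intro power_mono) auto
  also have "exp (- q - 2 * q\<^sup>2) ^ n = exp (- (real n * q) - 2 * (real n * q) * q)"
    by (simp add: algebra_simps power2_eq_square flip: exp_of_nat_mult)
  finally show ?thesis .
qed

lemma exp_neg_le_if_ge_inverse:
  fixes x b :: real assumes "0 < b" "1 / b \<le> x" shows "exp (- x) \<le> b"
proof -
  have "1 / b \<le> exp x" using assms(2) exp_ge_add_one_self[of x] by linarith
  then show ?thesis using assms(1) by (simp add: exp_minus field_simps)
qed

lemma exp_neg_le_quadratic: fixes l :: real assumes "0 \<le> l" shows "exp (- l) \<le> 1 - l + l\<^sup>2"
proof -
  have "exp (- l) * (1 + l) \<le> exp (- l) * exp l" by (intro mult_left_mono) auto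
  also have "\<dots> = 1" by (simp flip: exp_add)
  also have "1 \<le> (1 - l + l\<^sup>2) * (1 + l)" using assms by (simp add: algebra_simps power2_eq_square power3_eq_cube)
  finally show ?thesis using assms by (simp add: add_pos_nonneg)
qed

section \<open>The profile \<open>\<rho>\<^sup>*\<close>\<close>

definition geom_moment :: "real \<Rightarrow> nat \<Rightarrow> real" where
  "geom_moment \<sigma> j = (\<Sum>i. real (Suc i) ^ j / \<sigma> ^ Suc i)"

lemma rho_star_eq: "rho_star \<sigma> a j = (\<sigma> * exp (- a) - 1) * a ^ j / fact j * geom_moment \<sigma> j"
  by (simp add: rho_star_def geom_moment_def)

lemma geometric_sums_Suc: "\<bar>r::real\<bar> < 1 \<Longrightarrow> (\<lambda>i. r ^ Suc i) sums (r / (1 - r))"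
  using sums_mult[OF geometric_sums, of r r] by simp

text \<open>Domination by a geometric series: with \<open>t = ln \<sigma> / 2\<close>, the bound
  \<open>(t n)\<^sup>j \<le> j! exp (t n)\<close> gives \<open>n\<^sup>j / \<sigma>\<^sup>n \<le> (j!/t\<^sup>j) (exp t / \<sigma>)\<^sup>n\<close>, and \<open>exp t / \<sigma> = 1/\<surd>\<sigma> < 1\<close>.\<close>
lemma summable_geom_moment:
  assumes "\<sigma> > 1"
  shows "summable (\<lambda>i. real (Suc i) ^ j / \<sigma> ^ Suc i)"
proof -
  define t where "t = ln \<sigma> / 2"
  have t: "t > 0" using assms by (simp add: t_def)
  have tt: "exp t * exp t = \<sigma>" using assms by (simp add: t_def flip: exp_add)
  have "exp t < exp t * exp t" using t by simp
  then have r1: "exp t / \<sigma> < 1" using tt assms by simp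
  have "summable (\<lambda>i. (exp t / \<sigma>) ^ Suc i)"
    using geometric_sums_Suc[of "exp t / \<sigma>"] r1 assms sums_summable by auto
  then have sg: "summable (\<lambda>i. fact j / t ^ j * (exp t / \<sigma>) ^ Suc i)"
    by (rule summable_mult)
  show ?thesis
  proof (rule summable_comparison_test[OF _ sg], intro exI allI impI)
    fix i :: nat
    have "(t * real (Suc i)) ^ j \<le> fact j * exp (t * real (Suc i))"
      using t by (intro power_le_fact_mult_exp) simp
    moreover have "exp (t * real (Suc i)) = exp t ^ Suc i"
      using exp_of_nat_mult[of "Suc i" t] by (simp add: mult.commute)
    ultimately have "t ^ j * real (Suc i) ^ j \<le> fact j * exp t ^ Suc i"
      by (simp only: power_mult_distrib)
    then have "real (Suc i) ^ j \<le> fact j / t ^ j * exp t ^ Suc i"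
      using t by (simp add: field_simps)
    then have "real (Suc i) ^ j / \<sigma> ^ Suc i \<le> (fact j / t ^ j * exp t ^ Suc i) / \<sigma> ^ Suc i"
      using assms by (intro divide_right_mono) auto
    then show "norm (real (Suc i) ^ j / \<sigma> ^ Suc i) \<le> fact j / t ^ j * (exp t / \<sigma>) ^ Suc i"
      using assms by (simp add: power_divide)
  qed
qed

lemma geom_moment_pos: "\<sigma> > 1 \<Longrightarrow> geom_moment \<sigma> j > 0"
  unfolding geom_moment_def by (rule suminf_pos[OF summable_geom_moment]) auto

lemma geom_moment_0: "\<sigma> > 1 \<Longrightarrow> geom_moment \<sigma> 0 = 1 / (\<sigma> - 1)"
proof -
  assume s: "\<sigma> > 1"
  have "(\<lambda>i. (1/\<sigma>) ^ Suc i) sums ((1/\<sigma>) / (1 - 1/\<sigma>))" using s by (intro geometric_sums_Suc) auto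
  then have "geom_moment \<sigma> 0 = (1/\<sigma>) / (1 - 1/\<sigma>)"
    unfolding geom_moment_def by (simp add: sums_iff power_one_over)
  then show ?thesis using s by (simp add: field_simps)
qed

text \<open>Expand \<open>(n + 1)^k\<close> binomially inside \<open>\<Sum>n. (n + 1)^k / \<sigma>^(n+1)\<close> and shift the index.\<close>
lemma geom_moment_binomial:
  assumes s: "\<sigma> > 1"
  shows "(\<Sum>l\<le>k. real (k choose l) * geom_moment \<sigma> l) = \<sigma> * geom_moment \<sigma> k - 1"
proof -
  define f where "f = (\<lambda>i. real (Suc i) ^ k / \<sigma> ^ Suc i)"
  have sf: "summable f" unfolding f_def by (rule summable_geom_moment[OF s])
  have "(\<Sum>l\<le>k. real (k choose l) * geom_moment \<sigma> l)
      = (\<Sum>l\<le>k. (\<Sum>i. real (k choose l) * (real (Suc i) ^ l / \<sigma> ^ Suc i)))"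
    unfolding geom_moment_def by (intro sum.cong refl suminf_mult[symmetric] summable_geom_moment[OF s])
  also have "\<dots> = (\<Sum>i. \<Sum>l\<le>k. real (k choose l) * (real (Suc i) ^ l / \<sigma> ^ Suc i))"
    by (rule suminf_sum[symmetric]) (intro summable_mult summable_geom_moment[OF s])
  also have "\<dots> = (\<Sum>i. \<sigma> * f (Suc i))"
  proof (rule suminf_cong)
    fix i
    have "(\<Sum>l\<le>k. real (k choose l) * (real (Suc i) ^ l / \<sigma> ^ Suc i))
        = (\<Sum>l\<le>k. real (k choose l) * real (Suc i) ^ l * 1 ^ (k - l)) / \<sigma> ^ Suc i"
      by (simp add: sum_divide_distrib)
    also have "\<dots> = (real (Suc i) + 1) ^ k / \<sigma> ^ Suc i" by (subst binomial_ring) (rule refl)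
    also have "\<dots> = \<sigma> * f (Suc i)" using s by (simp add: f_def add.commute)
    finally show "(\<Sum>l\<le>k. real (k choose l) * (real (Suc i) ^ l / \<sigma> ^ Suc i)) = \<sigma> * f (Suc i)" .
  qed
  also have "\<dots> = \<sigma> * (suminf f - f 0)"
    using sf by (simp add: suminf_mult summable_Suc_iff suminf_split_head)
  also have "\<dots> = \<sigma> * geom_moment \<sigma> k - 1" using s by (simp add: f_def geom_moment_def algebra_simps)
  finally show ?thesis .
qed

lemma gt_one_if_mult_exp_neg_gt_one:
  fixes a \<sigma> :: real assumes "a > 0" "\<sigma> * exp (- a) > 1" shows "\<sigma> > 1"
proof (rule ccontr)
  assume "\<not> \<sigma> > 1"
  then have "\<sigma> * exp (-a) \<le> 1 * exp (-a)" using mult_right_mono[of \<sigma> 1 "exp (-a)"] by simp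
  moreover have "exp (-a) < 1" using assms(1) by simp
  ultimately show False using assms(2) by linarith
qed

lemma rho_star_0: "\<sigma> > 1 \<Longrightarrow> rho_star \<sigma> a 0 = (\<sigma> * exp (- a) - 1) / (\<sigma> - 1)"
  by (simp add: rho_star_eq geom_moment_0)

text \<open>The fixed-point relation satisfied by \<open>\<rho>\<^sup>*\<close>; with Poisson weights \<open>e\<^sup>-\<^sup>a a\<^sup>j/j!\<close> in place of
  \<open>M\<^sub>H(l,k)\<close>, it makes \<open>\<rho>\<^sup>*\<^sub>k\<close> the equilibrium of the limiting drift.\<close>
lemma rho_star_fixed_point:
  assumes s: "\<sigma> > 1" and k: "1 \<le> k"
  shows "\<sigma> * rho_star \<sigma> a 0 * (a ^ k / fact k) + (\<Sum>l\<in>{1..k-1}. rho_star \<sigma> a l * (a ^ (k - l) / fact (k - l)))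
     = rho_star \<sigma> a k * (\<sigma> - 1)"
proof -
  define B where "B = (\<sigma> * exp (- a) - 1) * a ^ k / fact k"
  define S where "S = (\<Sum>l\<in>{1..k-1}. real (k choose l) * geom_moment \<sigma> l)"
  have summand: "rho_star \<sigma> a l * (a ^ (k - l) / fact (k - l)) = B * (real (k choose l) * geom_moment \<sigma> l)"
    if "l \<le> k" for l
  proof -
    have "a ^ l * a ^ (k - l) = a ^ k" using that by (simp flip: power_add)
    then show ?thesis using that by (simp add: rho_star_eq B_def binomial_fact)
  qed
  have middle: "(\<Sum>l\<in>{1..k-1}. rho_star \<sigma> a l * (a ^ (k - l) / fact (k - l))) = B * S"
    unfolding sum_distrib_left S_def by (rule sum.cong[OF refl summand]) auto
  have "{..k} = insert 0 (insert k {1..k-1})" using k by auto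
  then have "(\<Sum>l\<le>k. real (k choose l) * geom_moment \<sigma> l) = geom_moment \<sigma> 0 + geom_moment \<sigma> k + S"
    using k by (simp add: S_def)
  moreover have "\<sigma> * geom_moment \<sigma> 0 = 1 + geom_moment \<sigma> 0"
    using geom_moment_0[OF s] s by (simp add: field_simps)
  ultimately have "\<sigma> * geom_moment \<sigma> 0 + S = \<sigma> * geom_moment \<sigma> k - geom_moment \<sigma> k"
    using geom_moment_binomial[OF s, of k] by linarith
  then have "B * (\<sigma> * geom_moment \<sigma> 0 + S) = B * (\<sigma> * geom_moment \<sigma> k - geom_moment \<sigma> k)"
    by (rule arg_cong)
  then have "B * (\<sigma> * geom_moment \<sigma> 0) + B * S = B * geom_moment \<sigma> k * (\<sigma> - 1)"
    by (simp add: algebra_simps)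
  moreover have "\<sigma> * rho_star \<sigma> a 0 * (a ^ k / fact k) = B * (\<sigma> * geom_moment \<sigma> 0)"
    and "rho_star \<sigma> a k = B * geom_moment \<sigma> k"
    by (simp_all add: rho_star_eq B_def)
  ultimately show ?thesis by (simp only: middle)
qed

lemma rho_star_pos: assumes "a > 0" "\<sigma> * exp (- a) > 1" shows "rho_star \<sigma> a j > 0"
  using geom_moment_pos[OF gt_one_if_mult_exp_neg_gt_one[OF assms]] assms by (simp add: rho_star_eq)

text \<open>Termwise, \<open>a\<^sup>k n\<^sup>k / k! \<le> e\<^sup>a\<^sup>n - 1\<close>; summing against \<open>\<sigma>\<^sup>-\<^sup>n\<close> gives
  \<open>\<rho>\<^sup>*\<^sub>k \<le> 1 - (\<sigma> e\<^sup>-\<^sup>a - 1)/(\<sigma> - 1)\<close>.\<close>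
lemma rho_star_lt_1:
  assumes a: "a > 0" and sa: "\<sigma> * exp (- a) > 1" and k: "1 \<le> k"
  shows "rho_star \<sigma> a k < 1"
proof -
  have s: "\<sigma> > 1" by (rule gt_one_if_mult_exp_neg_gt_one[OF a sa])
  define s0 where "s0 = \<sigma> * exp (- a) - 1"
  have s0: "s0 > 0" using sa by (simp add: s0_def)
  define r where "r = exp a / \<sigma>"
  have ea: "exp a * exp (-a) = 1" by (simp flip: exp_add)
  have "exp a * 1 < exp a * (\<sigma> * exp (-a))" using sa by simp
  then have "exp a < \<sigma>" using ea by (simp add: algebra_simps)
  then have r: "0 < r" "r < 1" using s by (auto simp: r_def)
  have g: "(\<lambda>i. r ^ Suc i - (1/\<sigma>) ^ Suc i) sums (r / (1 - r) - (1/\<sigma>) / (1 - 1/\<sigma>))"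
    using r s by (intro sums_diff geometric_sums_Suc) auto
  have sm: "summable (\<lambda>i. a ^ k / fact k * (real (Suc i) ^ k / \<sigma> ^ Suc i))"
    by (intro summable_mult summable_geom_moment s)
  have "a ^ k / fact k * geom_moment \<sigma> k = (\<Sum>i. a ^ k / fact k * (real (Suc i) ^ k / \<sigma> ^ Suc i))"
    unfolding geom_moment_def by (rule suminf_mult[symmetric, OF summable_geom_moment[OF s]])
  also have "\<dots> \<le> (\<Sum>i. r ^ Suc i - (1/\<sigma>) ^ Suc i)"
  proof (rule suminf_le[OF _ sm sums_summable[OF g]])
    fix i
    have "(a * real (Suc i)) ^ k / fact k \<le> exp (a * real (Suc i)) - 1"
      using a k by (intro power_div_fact_le_exp_minus_1) auto
    moreover have "exp (a * real (Suc i)) = exp a ^ Suc i"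
      using exp_of_nat_mult[of "Suc i" a] by (simp add: mult.commute)
    ultimately have "a ^ k * real (Suc i) ^ k / fact k / \<sigma> ^ Suc i \<le> (exp a ^ Suc i - 1) / \<sigma> ^ Suc i"
      using s by (intro divide_right_mono) (auto simp: power_mult_distrib)
    then show "a ^ k / fact k * (real (Suc i) ^ k / \<sigma> ^ Suc i) \<le> r ^ Suc i - (1/\<sigma>) ^ Suc i"
      by (simp add: r_def power_divide diff_divide_distrib)
  qed
  also have "\<dots> = r / (1 - r) - 1 / (\<sigma> - 1)" using g s sums_unique by (fastforce simp: field_simps)
  finally have le: "a ^ k / fact k * geom_moment \<sigma> k \<le> r / (1 - r) - 1 / (\<sigma> - 1)" .
  have "s0 * (r / (1 - r)) = 1"
    using ea s \<open>exp a < \<sigma>\<close> by (simp add: s0_def r_def field_simps)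
  have "rho_star \<sigma> a k = s0 * (a ^ k / fact k * geom_moment \<sigma> k)" by (simp add: rho_star_eq s0_def)
  also have "\<dots> \<le> s0 * (r / (1 - r) - 1 / (\<sigma> - 1))" using le s0 by (intro mult_left_mono) auto
  also have "\<dots> = 1 - s0 / (\<sigma> - 1)" using \<open>s0 * (r / (1 - r)) = 1\<close> by (simp add: algebra_simps)
  also have "\<dots> < 1" using s0 s by simp
  finally show ?thesis .
qed

lemma rho_star_le_1:
  assumes a: "a > 0" and sa: "\<sigma> * exp (- a) > 1"
  shows "rho_star \<sigma> a i \<le> 1"
proof (cases "i = 0")
  case True
  have s: "\<sigma> > 1" by (rule gt_one_if_mult_exp_neg_gt_one[OF a sa])
  have "\<sigma> * exp (- a) \<le> \<sigma>" using s a by (simp add: mult_left_le)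
  then show ?thesis using True s by (simp add: rho_star_0 divide_le_eq)
next
  case False then show ?thesis using rho_star_lt_1[OF a sa, of i] by simp
qed

section \<open>Birth and death chains with a restoring drift\<close>

definition step_mgf :: "real \<Rightarrow> real \<Rightarrow> real \<Rightarrow> real" where
  "step_mgf u d l = u * exp l + d * exp (- l) + (1 - u - d)"

lemma step_mgf_le:
  fixes u d l :: real assumes "0 \<le> u" "0 \<le> d" "0 \<le> l" "l \<le> 1"
  shows "step_mgf u d l \<le> 1 + l * (u - d) + l\<^sup>2 * (u + d)"
proof -
  have "u * exp l \<le> u * (1 + l + l\<^sup>2)" using assms exp_bound[of l] by (intro mult_left_mono) auto
  moreover have "d * exp (- l) \<le> d * (1 - l + l\<^sup>2)"
    using assms exp_neg_le_quadratic[of l] by (intro mult_left_mono) auto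
  ultimately show ?thesis by (simp add: step_mgf_def algebra_simps)
qed

lemma step_mgf_le_2:
  fixes u d l :: real assumes "0 \<le> u" "0 \<le> d" "u + d \<le> 1" "0 \<le> l" "l \<le> 1/2"
  shows "step_mgf u d l \<le> 2"
proof -
  have "l * (u - d) \<le> l" using mult_left_mono[of "u - d" 1 l] assms by simp
  moreover have "l\<^sup>2 * (u + d) \<le> l\<^sup>2" using mult_left_mono[of "u + d" 1 "l\<^sup>2"] assms by simp
  moreover have "l * l \<le> 1/2 * (1/2)" using mult_mono[of l "1/2" l "1/2"] assms by simp
  then have "l\<^sup>2 \<le> 1/4" by (simp add: power2_eq_square)
  moreover have "step_mgf u d l \<le> 1 + l * (u - d) + l\<^sup>2 * (u + d)"
    using assms by (intro step_mgf_le) auto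
  ultimately show ?thesis using assms by linarith
qed

lemma step_mgf_drift_le:
  fixes u d \<mu> :: real assumes "0 \<le> u" "0 \<le> d" "u + d \<le> 1" "0 < \<mu>" "\<mu> \<le> 1" "\<mu> \<le> d - u"
  shows "step_mgf u d (\<mu> / 2) \<le> 1 - \<mu>\<^sup>2 / 4"
proof -
  have "\<mu> / 2 * \<mu> \<le> \<mu> / 2 * (d - u)" "(\<mu> / 2)\<^sup>2 * (u + d) \<le> (\<mu> / 2)\<^sup>2 * 1"
    using assms by (intro mult_left_mono; simp)+
  then have "\<mu> / 2 * (u - d) \<le> - (\<mu>\<^sup>2 / 2)" "(\<mu> / 2)\<^sup>2 * (u + d) \<le> \<mu>\<^sup>2 / 4"
    by (simp_all add: power2_eq_square algebra_simps)
  moreover have "step_mgf u d (\<mu> / 2) \<le> 1 + \<mu> / 2 * (u - d) + (\<mu> / 2)\<^sup>2 * (u + d)"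
    using assms by (intro step_mgf_le) auto
  ultimately show ?thesis by linarith
qed

lemma mix_le_contraction:
  fixes T1 T2 f1 f2 \<mu> :: real
  assumes "1 \<le> T1" "0 \<le> T2" "T2 \<le> \<mu>\<^sup>2 / 16" "f1 \<le> 1 - \<mu>\<^sup>2 / 4" "f2 \<le> 2" "0 < \<mu>" "\<mu> \<le> 1"
  shows "T1 * f1 + T2 * f2 \<le> (1 - \<mu>\<^sup>2 / 8) * (T1 + T2)"
proof -
  have "T1 * f1 \<le> T1 * (1 - \<mu>\<^sup>2 / 4)" "T2 * f2 \<le> T2 * 2" "\<mu>\<^sup>2 / 8 * 1 \<le> \<mu>\<^sup>2 / 8 * T1"
    using assms by (intro mult_left_mono; simp)+
  moreover have "(1 + \<mu>\<^sup>2/8) * T2 \<le> 2 * (\<mu>\<^sup>2 / 16)"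
    using assms power_le_one[of \<mu> 2] by (intro mult_mono) auto
  ultimately have "T1 * f1 \<le> T1 - (T1 * \<mu>\<^sup>2) / 4" "T2 * f2 \<le> 2 * T2"
    "T2 + (T2 * \<mu>\<^sup>2) / 8 \<le> \<mu>\<^sup>2 / 8" "\<mu>\<^sup>2 / 8 \<le> (T1 * \<mu>\<^sup>2) / 8"
    by (simp_all add: algebra_simps)
  moreover have "(1 - \<mu>\<^sup>2 / 8) * (T1 + T2) = T1 + T2 - (T1 * \<mu>\<^sup>2) / 8 - (T2 * \<mu>\<^sup>2) / 8"
    by (simp add: algebra_simps)
  ultimately show ?thesis by linarith
qed

lemma mult_le_add_if_le:
  fixes T f E :: real
  assumes "0 \<le> T" "0 \<le> E" "f \<le> 2" "P \<Longrightarrow> f \<le> 1" "\<not> P \<Longrightarrow> T \<le> E"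
  shows "T * f \<le> T + E"
proof (cases P)
  case True then have "T * f \<le> T * 1" using assms by (intro mult_left_mono) auto
  then show ?thesis using assms(2) by simp
next
  case False then have "T * f \<le> T * 2" using assms by (intro mult_left_mono) auto
  then show ?thesis using assms False by simp
qed

definition step_mean :: "(nat \<Rightarrow> real) \<Rightarrow> (nat \<Rightarrow> real) \<Rightarrow> (nat \<Rightarrow> real) \<Rightarrow> nat \<Rightarrow> real" where
  "step_mean up dn f i = up i * f (Suc i) + dn i * f (i - 1) + (1 - up i - dn i) * f i"

lemma avoid_prob_Suc_step_mean:
  "avoid_prob up dn A (Suc n) i = (if i \<in> A then 0 else step_mean up dn (avoid_prob up dn A n) i)"
  by (simp add: step_mean_def)

lemma step_mean_affine: "step_mean up dn (\<lambda>j. s * f j + t) i = s * step_mean up dn f i + t"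
  by (simp add: step_mean_def algebra_simps)

lemma step_mean_scale: "step_mean up dn (\<lambda>j. s * f j) i = s * step_mean up dn f i"
  using step_mean_affine[of up dn s f 0 i] by simp

lemma step_mean_exp_pair:
  fixes up dn :: "nat \<Rightarrow> real" and l X1 X2 :: real
  assumes "0 < i \<or> dn i = 0"
  shows "step_mean up dn (\<lambda>j. exp (l * (real j - X1)) + exp (l * (X2 - real j))) i
     = exp (l * (real i - X1)) * step_mgf (up i) (dn i) l + exp (l * (X2 - real i)) * step_mgf (dn i) (up i) l"
proof -
  have Suc: "exp (l * (real (Suc i) - X1)) = exp (l * (real i - X1)) * exp l"
    "exp (l * (X2 - real (Suc i))) = exp (l * (X2 - real i)) * exp (- l)"
    by (simp_all add: algebra_simps flip: exp_add)
  show ?thesis using assms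
  proof
    assume "0 < i"
    then have "exp (l * (real (i - 1) - X1)) = exp (l * (real i - X1)) * exp (- l)"
      "exp (l * (X2 - real (i - 1))) = exp (l * (X2 - real i)) * exp l"
      by (simp_all add: of_nat_diff algebra_simps flip: exp_add)
    then show ?thesis unfolding step_mean_def step_mgf_def Suc by (simp add: algebra_simps)
  next
    assume "dn i = 0"
    then show ?thesis unfolding step_mean_def step_mgf_def Suc by (simp add: algebra_simps)
  qed
qed

locale drifting_chain =
  fixes up dn :: "nat \<Rightarrow> real" and m :: nat and c \<delta> \<mu> :: real
  assumes m_ge_1: "1 \<le> m" and \<delta>_pos: "0 < \<delta>" and \<mu>_pos: "0 < \<mu>" and \<mu>_le_1: "\<mu> \<le> 1"
    and c_nonneg: "0 \<le> c" and c_le_1: "c \<le> 1"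
    and rates: "\<And>i. i \<le> m \<Longrightarrow> 0 \<le> up i \<and> 0 \<le> dn i \<and> up i + dn i \<le> 1"
    and up_top: "up m = 0" and dn_bottom: "dn 0 = 0"
    and drift_down: "\<And>i. i \<le> m \<Longrightarrow> c + \<delta> \<le> real i / real m \<Longrightarrow> \<mu> \<le> dn i - up i"
    and drift_up: "\<And>i. i \<le> m \<Longrightarrow> real i / real m \<le> c - \<delta> \<Longrightarrow> \<mu> \<le> up i - dn i"
begin

definition window :: "real \<Rightarrow> nat set" where
  "window w = {i. i \<le> m \<and> \<bar>real i / real m - c\<bar> < w}"

definition lyap :: "real \<Rightarrow> nat \<Rightarrow> real" where
  "lyap w i = exp (\<mu>/2 * (real i - real m * (c + w))) + exp (\<mu>/2 * (real m * (c - w) - real i))"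

lemma lyap_nonneg: "0 \<le> lyap w i"
  by (simp add: lyap_def add_nonneg_nonneg)

lemma one_le_lyap_outside:
  assumes "\<not> \<bar>real i / real m - c\<bar> < w"
  shows "1 \<le> lyap w i"
proof -
  have mp: "real m > 0" using m_ge_1 by simp
  from assms have "real m * (c + w) \<le> real i \<or> real i \<le> real m * (c - w)"
    using mp by (auto simp: field_simps)
  then show ?thesis
    using \<mu>_pos by (auto simp: lyap_def intro: add_increasing add_increasing2)
qed

lemma lyap_le: "i \<le> m \<Longrightarrow> 0 \<le> w \<Longrightarrow> lyap w i \<le> 2 * exp (\<mu>/2 * real m)"
proof -
  assume "i \<le> m" "0 \<le> w"
  moreover have "real m * (c - w) \<le> real m * 1" using c_le_1 \<open>0 \<le> w\<close> by (intro mult_left_mono) auto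
  moreover have "0 \<le> real m * (c + w)" using c_nonneg \<open>0 \<le> w\<close> by simp
  ultimately have "real i - real m * (c + w) \<le> real m" "real m * (c - w) - real i \<le> real m"
    by auto
  then have "\<mu>/2 * (real i - real m * (c + w)) \<le> \<mu>/2 * real m"
    "\<mu>/2 * (real m * (c - w) - real i) \<le> \<mu>/2 * real m"
    using \<mu>_pos by (intro mult_left_mono; simp)+
  then show ?thesis unfolding lyap_def by (smt (verit) exp_le_cancel_iff)
qed

lemma step_mean_mono:
  assumes "\<And>j. j \<le> m \<Longrightarrow> f j \<le> g j" and i: "i \<le> m"
  shows "step_mean up dn f i \<le> step_mean up dn g i"
proof -
  have r: "0 \<le> up i" "0 \<le> dn i" "0 \<le> 1 - up i - dn i" using rates[OF i] by auto
  have "up i * f (Suc i) \<le> up i * g (Suc i)"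
    using assms r up_top by (cases "i = m") (auto intro: mult_left_mono)
  moreover have "dn i * f (i - 1) \<le> dn i * g (i - 1)"
    using assms r by (intro mult_left_mono) auto
  moreover have "(1 - up i - dn i) * f i \<le> (1 - up i - dn i) * g i"
    using assms r by (intro mult_left_mono) auto
  ultimately show ?thesis by (simp add: step_mean_def)
qed

lemma step_mean_lyap:
  "step_mean up dn (lyap w) i
     = exp (\<mu>/2 * (real i - real m * (c + w))) * step_mgf (up i) (dn i) (\<mu>/2)
     + exp (\<mu>/2 * (real m * (c - w) - real i)) * step_mgf (dn i) (up i) (\<mu>/2)"
  unfolding lyap_def by (rule step_mean_exp_pair) (use dn_bottom in \<open>cases i; auto\<close>)

lemma step_mgf_rates_le_2: "i \<le> m \<Longrightarrow> step_mgf (up i) (dn i) (\<mu>/2) \<le> 2 \<and> step_mgf (dn i) (up i) (\<mu>/2) \<le> 2"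
  using rates[of i] \<mu>_pos \<mu>_le_1 by (auto intro!: step_mgf_le_2)

text \<open>Outside the window the Lyapunov function decreases geometrically in expectation: the term
  that is large is contracted by the drift, and the other one is negligible.\<close>
lemma lyap_contraction:
  assumes big: "exp (- \<mu> * \<delta> * real m) \<le> \<mu>\<^sup>2 / 16" and i: "i \<le> m" and out: "i \<notin> window \<delta>"
  shows "step_mean up dn (lyap \<delta>) i \<le> (1 - \<mu>\<^sup>2 / 8) * lyap \<delta> i"
proof -
  define T1 where "T1 = exp (\<mu>/2 * (real i - real m * (c + \<delta>)))"
  define T2 where "T2 = exp (\<mu>/2 * (real m * (c - \<delta>) - real i))"
  have r: "0 \<le> up i" "0 \<le> dn i" "up i + dn i \<le> 1" using rates[OF i] by auto
  have mp: "real m > 0" using m_ge_1 by simp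
  have "\<not> \<bar>real i / real m - c\<bar> < \<delta>" using out i by (simp add: window_def)
  then consider "real m * (c + \<delta>) \<le> real i" | "real i \<le> real m * (c - \<delta>)"
    using mp by (fastforce simp: field_simps)
  then show ?thesis
  proof cases
    case 1
    then have "1 \<le> T1" using \<mu>_pos by (simp add: T1_def)
    moreover have "T2 \<le> \<mu>\<^sup>2 / 16"
    proof -
      have "\<mu>/2 * (real m * (c - \<delta>) - real i) \<le> \<mu>/2 * (- 2 * \<delta> * real m)"
        using 1 \<mu>_pos by (intro mult_left_mono) (auto simp: algebra_simps)
      also have "\<dots> = - \<mu> * \<delta> * real m" by simp
      finally show ?thesis using big unfolding T2_def by (meson exp_le_cancel_iff order_trans)
    qed
    moreover have "step_mgf (up i) (dn i) (\<mu>/2) \<le> 1 - \<mu>\<^sup>2 / 4"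
      using 1 mp r \<mu>_pos \<mu>_le_1 drift_down[OF i] by (intro step_mgf_drift_le) (auto simp: field_simps)
    ultimately show ?thesis
      using mix_le_contraction[of T1 T2] step_mgf_rates_le_2[OF i] \<mu>_pos \<mu>_le_1
      by (simp add: step_mean_lyap lyap_def T1_def T2_def)
  next
    case 2
    then have "1 \<le> T2" using \<mu>_pos by (simp add: T2_def)
    moreover have "T1 \<le> \<mu>\<^sup>2 / 16"
    proof -
      have "\<mu>/2 * (real i - real m * (c + \<delta>)) \<le> \<mu>/2 * (- 2 * \<delta> * real m)"
        using 2 \<mu>_pos by (intro mult_left_mono) (auto simp: algebra_simps)
      also have "\<dots> = - \<mu> * \<delta> * real m" by simp
      finally show ?thesis using big unfolding T1_def by (meson exp_le_cancel_iff order_trans)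
    qed
    moreover have "step_mgf (dn i) (up i) (\<mu>/2) \<le> 1 - \<mu>\<^sup>2 / 4"
      using 2 mp r \<mu>_pos \<mu>_le_1 drift_up[OF i] by (intro step_mgf_drift_le) (auto simp: field_simps)
    ultimately show ?thesis
      using mix_le_contraction[of T2 T1] step_mgf_rates_le_2[OF i] \<mu>_pos \<mu>_le_1
      by (simp add: step_mean_lyap lyap_def T1_def T2_def algebra_simps)
  qed
qed

text \<open>On the doubled window the Lyapunov function can grow in expectation only by an amount that is
  exponentially small in \<open>m\<close>: each term either sees a favourable drift or is itself that small.\<close>
lemma lyap_step_le:
  assumes i: "i \<le> m"
  shows "step_mean up dn (lyap (2 * \<delta>)) i \<le> lyap (2 * \<delta>) i + 2 * exp (- \<mu>/2 * \<delta> * real m)"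
proof -
  define E where "E = exp (- \<mu>/2 * \<delta> * real m)"
  have r: "0 \<le> up i" "0 \<le> dn i" "up i + dn i \<le> 1" using rates[OF i] by auto
  have mp: "real m > 0" using m_ge_1 by simp
  have "exp (\<mu>/2 * (real i - real m * (c + 2 * \<delta>))) * step_mgf (up i) (dn i) (\<mu>/2)
      \<le> exp (\<mu>/2 * (real i - real m * (c + 2 * \<delta>))) + E"
  proof (rule mult_le_add_if_le[where P = "c + \<delta> \<le> real i / real m"])
    show "c + \<delta> \<le> real i / real m \<Longrightarrow> step_mgf (up i) (dn i) (\<mu>/2) \<le> 1"
      using step_mgf_drift_le[of "up i" "dn i" \<mu>] r \<mu>_pos \<mu>_le_1 drift_down[OF i]
      by (smt (verit) zero_le_power2 divide_nonneg_pos)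
    assume "\<not> c + \<delta> \<le> real i / real m"
    then have "\<mu>/2 * (real i - real m * (c + 2 * \<delta>)) \<le> \<mu>/2 * (- \<delta> * real m)"
      using mp \<mu>_pos by (intro mult_left_mono) (auto simp: field_simps)
    then show "exp (\<mu>/2 * (real i - real m * (c + 2 * \<delta>))) \<le> E" by (simp add: E_def)
  qed (use step_mgf_rates_le_2[OF i] in \<open>auto simp: E_def\<close>)
  moreover have "exp (\<mu>/2 * (real m * (c - 2 * \<delta>) - real i)) * step_mgf (dn i) (up i) (\<mu>/2)
      \<le> exp (\<mu>/2 * (real m * (c - 2 * \<delta>) - real i)) + E"
  proof (rule mult_le_add_if_le[where P = "real i / real m \<le> c - \<delta>"])
    show "real i / real m \<le> c - \<delta> \<Longrightarrow> step_mgf (dn i) (up i) (\<mu>/2) \<le> 1"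
      using step_mgf_drift_le[of "dn i" "up i" \<mu>] r \<mu>_pos \<mu>_le_1 drift_up[OF i]
      by (smt (verit) zero_le_power2 divide_nonneg_pos)
    assume "\<not> real i / real m \<le> c - \<delta>"
    then have "\<mu>/2 * (real m * (c - 2 * \<delta>) - real i) \<le> \<mu>/2 * (- \<delta> * real m)"
      using mp \<mu>_pos by (intro mult_left_mono) (auto simp: field_simps)
    then show "exp (\<mu>/2 * (real m * (c - 2 * \<delta>) - real i)) \<le> E" by (simp add: E_def)
  qed (use step_mgf_rates_le_2[OF i] in \<open>auto simp: E_def\<close>)
  ultimately show ?thesis by (simp add: step_mean_lyap lyap_def E_def)
qed

lemma avoid_window_le:
  assumes big: "exp (- \<mu> * \<delta> * real m) \<le> \<mu>\<^sup>2 / 16"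
  shows "i \<le> m \<Longrightarrow> avoid_prob up dn (window \<delta>) (Suc n) i \<le> (1 - \<mu>\<^sup>2 / 8) ^ n * lyap \<delta> i"
proof (induction n arbitrary: i)
  case 0
  then show ?case
    using one_le_lyap_outside[of i \<delta>] step_mean_affine[of up dn 0 _ 1 i] lyap_nonneg[of \<delta> i]
    by (auto simp: avoid_prob_Suc_step_mean window_def)
next
  case (Suc n)
  have \<rho>: "0 \<le> 1 - \<mu>\<^sup>2 / 8" using \<mu>_pos \<mu>_le_1 power_le_one[of \<mu> 2] by simp
  show ?case
  proof (cases "i \<in> window \<delta>")
    case True then show ?thesis using \<rho> lyap_nonneg[of \<delta> i] by simp
  next
    case False
    have "avoid_prob up dn (window \<delta>) (Suc (Suc n)) i
        \<le> step_mean up dn (\<lambda>j. (1 - \<mu>\<^sup>2 / 8) ^ n * lyap \<delta> j) i"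
      using False Suc by (auto simp: avoid_prob_Suc_step_mean simp del: avoid_prob.simps
          intro!: step_mean_mono)
    also have "\<dots> = (1 - \<mu>\<^sup>2 / 8) ^ n * step_mean up dn (lyap \<delta>) i"
      by (rule step_mean_scale)
    also have "\<dots> \<le> (1 - \<mu>\<^sup>2 / 8) ^ n * ((1 - \<mu>\<^sup>2 / 8) * lyap \<delta> i)"
      using lyap_contraction[OF big Suc.prems False] \<rho> by (simp add: mult_left_mono)
    finally show ?thesis by (simp add: mult_ac)
  qed
qed

lemma escape_le:
  "i \<le> m \<Longrightarrow> 1 - avoid_prob up dn ({0..m} - window (2 * \<delta>)) n i
     \<le> lyap (2 * \<delta>) i + real n * (2 * exp (- \<mu>/2 * \<delta> * real m))"
proof (induction n arbitrary: i)
  case 0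
  then show ?case using lyap_nonneg by simp
next
  case (Suc n)
  define E where "E = 2 * exp (- \<mu>/2 * \<delta> * real m)"
  show ?case
  proof (cases "i \<in> {0..m} - window (2 * \<delta>)")
    case True
    then have "1 \<le> lyap (2 * \<delta>) i" by (intro one_le_lyap_outside) (auto simp: window_def)
    moreover have "0 \<le> real (Suc n) * E" by (simp add: E_def)
    moreover have "avoid_prob up dn ({0..m} - window (2 * \<delta>)) (Suc n) i = 0" using True by simp
    ultimately show ?thesis unfolding E_def by linarith
  next
    case False
    have "1 - avoid_prob up dn ({0..m} - window (2 * \<delta>)) (Suc n) i
        = step_mean up dn (\<lambda>j. - 1 * avoid_prob up dn ({0..m} - window (2 * \<delta>)) n j + 1) i"
      using False step_mean_affine[of up dn "- 1" "avoid_prob up dn ({0..m} - window (2 * \<delta>)) n" 1 i]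
      by (simp only: avoid_prob_Suc_step_mean if_False)
    also have "\<dots> \<le> step_mean up dn (\<lambda>j. 1 * lyap (2 * \<delta>) j + real n * E) i"
      using Suc by (intro step_mean_mono) (auto simp: E_def)
    also have "\<dots> \<le> lyap (2 * \<delta>) i + E + real n * E"
      using lyap_step_le[OF Suc.prems] step_mean_affine[of up dn 1 "lyap (2 * \<delta>)" "real n * E" i]
      by (simp add: E_def)
    finally show ?thesis by (simp add: E_def algebra_simps)
  qed
qed

lemma lyap_double_window_le:
  assumes "i \<in> window \<delta>"
  shows "lyap (2 * \<delta>) i \<le> 2 * exp (- \<mu>/2 * \<delta> * real m)"
proof -
  have mp: "real m > 0" using m_ge_1 by simp
  have "real i / real m < c + \<delta>" "c - \<delta> < real i / real m"
    using assms by (auto simp: window_def abs_less_iff)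
  then have "real i < (c + \<delta>) * real m" "(c - \<delta>) * real m < real i"
    using mp by (auto simp: divide_less_eq less_divide_eq)
  then have "real i - real m * (c + 2 * \<delta>) \<le> - \<delta> * real m"
    "real m * (c - 2 * \<delta>) - real i \<le> - \<delta> * real m"
    by (simp_all add: algebra_simps)
  then have "exp (\<mu>/2 * (real i - real m * (c + 2 * \<delta>))) \<le> exp (- \<mu>/2 * \<delta> * real m)"
    "exp (\<mu>/2 * (real m * (c - 2 * \<delta>) - real i)) \<le> exp (- \<mu>/2 * \<delta> * real m)"
    using mult_left_mono[of _ "- \<delta> * real m" "\<mu>/2"] \<mu>_pos by (auto simp: mult.assoc)
  then show ?thesis unfolding lyap_def by linarith
qed

lemma prob_tau_ge_window_le:
  assumes m1: "32 / \<mu>\<^sup>2 \<le> real m" and m2: "16 / (\<mu> ^ 3 * \<delta>) \<le> real m" and i: "i \<le> m"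
  shows "prob_tau_ge up dn (window \<delta>) (real m powr 2) i \<le> exp (- real m)"
proof -
  define n where "n = m\<^sup>2 - 1"
  define A where "A = real n * (\<mu>\<^sup>2 / 8)"
  have mp: "real m > 0" using m_ge_1 by simp
  have \<mu>2: "0 < \<mu>\<^sup>2" "\<mu>\<^sup>2 \<le> 1" using \<mu>_pos \<mu>_le_1 power_le_one[of \<mu> 2] by auto
  have "16 \<le> real m * (\<mu> ^ 3 * \<delta>)" using m2 \<mu>_pos \<delta>_pos by (simp add: divide_le_eq)
  then have "16 / \<mu>\<^sup>2 \<le> \<mu> * \<delta> * real m"
    using \<mu>2 by (simp add: divide_le_eq power2_eq_square power3_eq_cube algebra_simps)
  then have big: "exp (- \<mu> * \<delta> * real m) \<le> \<mu>\<^sup>2 / 16"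
    using exp_neg_le_if_ge_inverse[of "\<mu>\<^sup>2 / 16" "\<mu> * \<delta> * real m"] \<mu>2 by simp
  have "real m powr 2 = real (m\<^sup>2)" using mp by simp
  then have "nat \<lceil>real m powr 2\<rceil> = Suc n"
    using m_ge_1 by (simp only: ceiling_of_nat nat_int n_def) simp
  then have "prob_tau_ge up dn (window \<delta>) (real m powr 2) i \<le> (1 - \<mu>\<^sup>2 / 8) ^ n * lyap \<delta> i"
    unfolding prob_tau_ge_def using avoid_window_le[OF big i] by simp
  also have "\<dots> \<le> exp (- A) * (2 * exp (\<mu>/2 * real m))"
  proof (rule mult_mono)
    show "(1 - \<mu>\<^sup>2 / 8) ^ n \<le> exp (- A)"
      unfolding A_def using \<mu>2 by (intro one_minus_power_le_exp) auto
    show "lyap \<delta> i \<le> 2 * exp (\<mu>/2 * real m)" using lyap_le[OF i] \<delta>_pos by simp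
  qed (use lyap_nonneg in auto)
  also have "\<dots> = 2 * exp (- A + \<mu>/2 * real m)" by (metis exp_add mult.left_commute)
  also have "\<dots> \<le> exp 1 * exp (- A + \<mu>/2 * real m)"
    using exp_ge_add_one_self[of 1] by (intro mult_right_mono) auto
  also have "\<dots> = exp (1 - A + \<mu>/2 * real m)" by (simp add: exp_add exp_diff)
  also have "\<dots> \<le> exp (- real m)"
  proof -
    have rn: "real n = real m * real m - 1"
      using m_ge_1 by (simp add: n_def of_nat_diff power2_eq_square)
    have "4 \<le> \<mu>\<^sup>2 / 8 * real m" using m1 \<mu>2 by (simp add: divide_le_eq mult.commute)
    then have "4 * real m \<le> (\<mu>\<^sup>2 / 8 * real m) * real m" using mp by (intro mult_right_mono) auto
    moreover have "A = (\<mu>\<^sup>2 / 8 * real m) * real m - \<mu>\<^sup>2 / 8" unfolding A_def rn by (simp add: field_simps)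
    moreover have "\<mu>/2 * real m \<le> real m" using \<mu>_le_1 mp by simp
    ultimately show ?thesis unfolding exp_le_cancel_iff using \<mu>2 m_ge_1 by linarith
  qed
  finally show ?thesis .
qed

lemma prob_tau_le_escape_le:
  assumes m3: "48 / (\<mu> * \<delta>) \<le> real m" and i: "i \<in> window \<delta>"
  shows "prob_tau_le up dn ({0..m} - window (2 * \<delta>)) (exp (\<mu> * \<delta> / 8 * real m)) i
     \<le> exp (- (\<mu> * \<delta> / 4) * real m)"
proof -
  define x where "x = \<mu> * \<delta> / 8 * real m"
  define n where "n = nat \<lfloor>exp x\<rfloor> + 1"
  define E where "E = exp (- \<mu>/2 * \<delta> * real m)"
  have E: "E = exp (- x) ^ 4" by (simp add: E_def x_def flip: exp_of_nat_mult)
  have "6 \<le> x" using m3 \<mu>_pos \<delta>_pos by (simp add: x_def divide_le_eq algebra_simps)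
  have "real n \<le> exp x + 1" by (simp add: n_def)
  moreover have "1 \<le> exp x" using \<open>6 \<le> x\<close> by simp
  ultimately have n: "real n \<le> 2 * exp x" by linarith
  have small: "exp (- x) \<le> 1 / 6" using \<open>6 \<le> x\<close> by (intro exp_neg_le_if_ge_inverse) auto
  have "i \<le> m" using i by (simp add: window_def)
  have "prob_tau_le up dn ({0..m} - window (2 * \<delta>)) (exp x) i
      = 1 - avoid_prob up dn ({0..m} - window (2 * \<delta>)) n i"
    by (simp add: prob_tau_le_def n_def del: avoid_prob.simps)
  also have "\<dots> \<le> lyap (2 * \<delta>) i + real n * (2 * E)"
    using escape_le[OF \<open>i \<le> m\<close>, of n] by (simp add: E_def)
  also have "\<dots> \<le> 2 * E + 2 * exp x * (2 * E)"
    using lyap_double_window_le[OF i] n by (intro add_mono mult_right_mono) (auto simp: E_def)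
  also have "\<dots> \<le> 6 * exp x * E" using \<open>6 \<le> x\<close> by (simp add: E_def)
  also have "\<dots> = exp (- x) ^ 2 * (6 * exp (- x))"
    by (simp add: E exp_minus field_simps eval_nat_numeral)
  also have "\<dots> \<le> exp (- x) ^ 2" using small by (simp add: mult_left_le)
  also have "\<dots> = exp (- (\<mu> * \<delta> / 4) * real m)" by (simp add: x_def flip: exp_of_nat_mult)
  finally show ?thesis by (simp add: x_def)
qed

end

definition hitting_threshold :: "real \<Rightarrow> real \<Rightarrow> nat" where
  "hitting_threshold \<delta> \<mu> = nat \<lceil>max (32 / \<mu>\<^sup>2) (max (16 / (\<mu> ^ 3 * \<delta>)) (48 / (\<mu> * \<delta>)))\<rceil>"

lemma (in drifting_chain) hitting_time_bounds:
  assumes "hitting_threshold \<delta> \<mu> \<le> m"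
  shows "(\<forall>i\<le>m. prob_tau_ge up dn {i. i \<le> m \<and> \<bar>real i / real m - c\<bar> < \<delta>} (real m powr 2) i
        \<le> exp (- 1 * real m))
    \<and> (\<forall>i\<in>{i. i \<le> m \<and> \<bar>real i / real m - c\<bar> < \<delta>}.
        prob_tau_le up dn ({0..m} - {i. i \<le> m \<and> \<bar>real i / real m - c\<bar> < 2 * \<delta>}) (exp (\<mu> * \<delta> / 8 * real m)) i
          \<le> exp (- (\<mu> * \<delta> / 4) * real m))"
proof -
  have "max (32 / \<mu>\<^sup>2) (max (16 / (\<mu> ^ 3 * \<delta>)) (48 / (\<mu> * \<delta>))) \<le> real m"
    using assms real_nat_ceiling_ge[of "max (32 / \<mu>\<^sup>2) (max (16 / (\<mu> ^ 3 * \<delta>)) (48 / (\<mu> * \<delta>)))"]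
    unfolding hitting_threshold_def by linarith
  then show ?thesis using prob_tau_ge_window_le prob_tau_le_escape_le by (simp add: window_def)
qed

section \<open>Poisson limits of \<open>M\<^sub>H\<close>\<close>

definition regime :: "real \<Rightarrow> (nat \<times> real) filter" where
  "regime a = inf (sequentially \<times>\<^sub>F at_right 0) (filtercomap (\<lambda>x. real (fst x) * snd x) (nhds a))"

lemma eventually_regime_prod: "eventually P (sequentially \<times>\<^sub>F at_right 0) \<Longrightarrow> eventually P (regime a)"
  unfolding regime_def eventually_inf by (intro exI[of _ P] exI[of _ "\<lambda>_. True"]) auto

lemma eventually_regime_fst_ge: "eventually (\<lambda>x. N \<le> fst x) (regime a)"
  by (rule eventually_regime_prod, unfold eventually_prod_filter)
    (rule exI[of _ "\<lambda>L. N \<le> L"], rule exI[of _ "\<lambda>_. True"], auto)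

lemma eventually_regime_snd: "0 < b \<Longrightarrow> eventually (\<lambda>x. 0 < snd x \<and> snd x < b) (regime a)"
  by (rule eventually_regime_prod, unfold eventually_prod_filter)
    (rule exI[of _ "\<lambda>_. True"], rule exI[of _ "\<lambda>q. 0 < q \<and> q < b"], auto simp: eventually_at_right_field)

lemma tendsto_regime_snd: "(snd \<longlongrightarrow> 0) (regime a)"
proof (rule order_tendstoI)
  fix y :: real assume "y < 0"
  then show "eventually (\<lambda>x. y < snd x) (regime a)"
    by (auto intro: eventually_mono[OF eventually_regime_snd[of 1]])
next
  fix y :: real assume "0 < y"
  then show "eventually (\<lambda>x. snd x < y) (regime a)"
    by (auto intro: eventually_mono[OF eventually_regime_snd[of y]])
qed

lemma tendsto_regime_product: "((\<lambda>x. real (fst x) * snd x) \<longlongrightarrow> a) (regime a)"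
  unfolding regime_def by (rule filterlim_mono[OF filterlim_filtercomap]) auto

lemma tendsto_regime_shifted_product: "((\<lambda>x. real (fst x - d) * snd x) \<longlongrightarrow> a) (regime a)"
proof (rule Lim_transform_eventually)
  show "((\<lambda>x. real (fst x) * snd x - real d * snd x) \<longlongrightarrow> a) (regime a)"
    using tendsto_diff[OF tendsto_regime_product tendsto_mult[OF tendsto_const tendsto_regime_snd]] by simp
  show "eventually (\<lambda>x. real (fst x) * snd x - real d * snd x = real (fst x - d) * snd x) (regime a)"
    by (rule eventually_mono[OF eventually_regime_fst_ge[of d]]) (auto simp: of_nat_diff algebra_simps)
qed

lemma eventually_regimeD:
  assumes "eventually P (regime a)"
  shows "\<exists>N. \<exists>\<eta>>0. \<forall>L q. N \<le> L \<and> 0 < q \<and> q < \<eta> \<and> \<bar>real L * q - a\<bar> < \<eta> \<longrightarrow> P (L, q)"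
proof -
  obtain Q R where Q: "eventually Q (sequentially \<times>\<^sub>F at_right 0)"
    and R: "eventually R (filtercomap (\<lambda>x. real (fst x) * snd x) (nhds a))" and QR: "\<forall>x. Q x \<and> R x \<longrightarrow> P x"
    using assms unfolding regime_def eventually_inf by blast
  obtain Pf Pg where Pf: "eventually Pf sequentially" and Pg: "eventually Pg (at_right (0::real))"
    and PQ: "\<forall>x y. Pf x \<longrightarrow> Pg y \<longrightarrow> Q (x, y)"
    using Q unfolding eventually_prod_filter by blast
  obtain N where N: "\<forall>n\<ge>N. Pf n" using Pf unfolding eventually_sequentially by blast
  obtain b where b: "b > 0" "\<forall>y>0. y < b \<longrightarrow> Pg y" using Pg unfolding eventually_at_right_field by auto
  obtain R' where R': "eventually R' (nhds a)" and RR: "\<forall>x. R' (real (fst x) * snd x) \<longrightarrow> R x"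
    using R unfolding eventually_filtercomap by blast
  obtain d where d: "d > 0" "\<forall>y. dist y a < d \<longrightarrow> R' y" using R' unfolding eventually_nhds_metric by blast
  show ?thesis
  proof (intro exI[of _ N] exI[of _ "min b d"] conjI allI impI)
    show "0 < min b d" using b d by simp
    fix L q assume "N \<le> L \<and> 0 < q \<and> q < min b d \<and> \<bar>real L * q - a\<bar> < min b d"
    then show "P (L, q)" using PQ N b RR d QR by (fastforce simp: dist_real_def)
  qed
qed

lemma tendsto_regime_one_minus_power: "((\<lambda>x. (1 - snd x) ^ (fst x - d)) \<longlongrightarrow> exp (- a)) (regime a)"
proof (rule tendsto_sandwich)
  show "eventually (\<lambda>x. exp (- (real (fst x - d) * snd x) - 2 * (real (fst x - d) * snd x) * snd x)
      \<le> (1 - snd x) ^ (fst x - d)) (regime a)"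
    by (rule eventually_mono[OF eventually_regime_snd[of "1/2"]]) (auto intro!: exp_le_one_minus_power)
  show "eventually (\<lambda>x. (1 - snd x) ^ (fst x - d) \<le> exp (- (real (fst x - d) * snd x))) (regime a)"
    by (rule eventually_mono[OF eventually_regime_snd[of "1/2"]]) (auto intro!: one_minus_power_le_exp)
  show "((\<lambda>x. exp (- (real (fst x - d) * snd x))) \<longlongrightarrow> exp (- a)) (regime a)"
    by (intro tendsto_intros tendsto_regime_shifted_product)
  have "((\<lambda>x. - (real (fst x - d) * snd x) - 2 * (real (fst x - d) * snd x) * snd x) \<longlongrightarrow> - a - 2 * a * 0)
      (regime a)"
    by (intro tendsto_intros tendsto_regime_shifted_product tendsto_regime_snd)
  from tendsto_exp[OF this]
  show "((\<lambda>x. exp (- (real (fst x - d) * snd x) - 2 * (real (fst x - d) * snd x) * snd x)) \<longlongrightarrow> exp (- a))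
      (regime a)"
    by simp
qed

lemma tendsto_regime_binomial:
  "((\<lambda>x. real ((fst x - b) choose j) * snd x ^ j * (1 - snd x) ^ (fst x - b - j))
     \<longlongrightarrow> exp (- a) * a ^ j / fact j) (regime a)"
proof -
  have "((\<lambda>x. \<Prod>i=0..<j. (real (fst x - b) - real i) * snd x) \<longlongrightarrow> (\<Prod>i=0..<j. a)) (regime a)"
  proof (rule tendsto_prod)
    fix i
    have "((\<lambda>x. real (fst x - b) * snd x - real i * snd x) \<longlongrightarrow> a - real i * 0) (regime a)"
      by (intro tendsto_intros tendsto_regime_shifted_product tendsto_regime_snd)
    then show "((\<lambda>x. (real (fst x - b) - real i) * snd x) \<longlongrightarrow> a) (regime a)" by (simp add: algebra_simps)
  qed
  then have "((\<lambda>x. (\<Prod>i=0..<j. (real (fst x - b) - real i) * snd x) / fact j * (1 - snd x) ^ (fst x - (b + j)))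
      \<longlongrightarrow> (\<Prod>i=0..<j. a) / fact j * exp (- a)) (regime a)"
    by (intro tendsto_mult tendsto_divide tendsto_const tendsto_regime_one_minus_power) auto
  moreover have "real (n choose j) * q ^ j = (\<Prod>i=0..<j. (real n - real i) * q) / fact j" for n :: nat and q :: real
    by (simp add: binomial_gbinomial gbinomial_prod_rev prod.distrib)
  ultimately show ?thesis by (simp add: diff_diff_left mult_ac)
qed

text \<open>With \<open>p (1 - 1/\<kappa>) = q\<close> and \<open>p/\<kappa> = q/(\<kappa> - 1)\<close>, the constraint \<open>k' - l = c - b\<close> leaves one
  summand of \<open>M\<^sub>H(b,c)\<close> for each \<open>l\<close>.\<close>
definition Mh_term :: "nat \<Rightarrow> real \<Rightarrow> real \<Rightarrow> nat \<Rightarrow> nat \<Rightarrow> nat \<Rightarrow> real" where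
  "Mh_term L \<kappa> q b c l =
     (if b \<le> c + l then real ((L - b) choose (c + l - b)) * q ^ (c + l - b) * (1 - q) ^ (L - b - (c + l - b))
        * (real (b choose l) * (q / (\<kappa> - 1)) ^ l * (1 - q / (\<kappa> - 1)) ^ (b - l)) else 0)"

lemma Mh_eq_sum_Mh_term:
  assumes k: "\<kappa> > 1" and L: "b + c \<le> L"
  shows "Mh L \<kappa> q b c = (\<Sum>l\<in>{0..b}. Mh_term L \<kappa> q b c l)"
proof -
  define p where "p = \<kappa> * q / (\<kappa> - 1)"
  have p1: "p * (1 - 1/\<kappa>) = q" and p2: "p / \<kappa> = q / (\<kappa> - 1)" using k by (simp_all add: p_def field_simps)
  have cond: "(int k' - int l = int c - int b) \<longleftrightarrow> (b \<le> c + l \<and> k' = c + l - b)" for k' l by auto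
  have "Mh L \<kappa> q b c = (\<Sum>l\<in>{0..b}. \<Sum>k'\<in>{0..L - b}.
        (if int k' - int l = int c - int b then
           real ((L - b) choose k') * q ^ k' * (1 - q) ^ (L - b - k')
           * real (b choose l) * (q / (\<kappa> - 1)) ^ l * (1 - q / (\<kappa> - 1)) ^ (b - l)
         else 0))"
    unfolding Mh_def Let_def p_def[symmetric] p1 p2 by (rule sum.swap)
  also have "\<dots> = (\<Sum>l\<in>{0..b}. Mh_term L \<kappa> q b c l)"
  proof (rule sum.cong[OF refl])
    fix l assume l: "l \<in> {0..b}"
    then have "b \<le> c + l \<Longrightarrow> c + l - b \<in> {0..L - b}" using L by auto
    then show "(\<Sum>k'\<in>{0..L - b}.
        (if int k' - int l = int c - int b then
           real ((L - b) choose k') * q ^ k' * (1 - q) ^ (L - b - k')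
           * real (b choose l) * (q / (\<kappa> - 1)) ^ l * (1 - q / (\<kappa> - 1)) ^ (b - l)
         else 0)) = Mh_term L \<kappa> q b c l"
      unfolding cond Mh_term_def by (simp add: sum.delta' algebra_simps)
  qed
  finally show ?thesis .
qed

definition Mh_limit :: "real \<Rightarrow> nat \<Rightarrow> nat \<Rightarrow> real" where
  "Mh_limit a b c = (if b \<le> c then exp (- a) * a ^ (c - b) / fact (c - b) else 0)"

lemma Mh_limit_bounds: "0 < a \<Longrightarrow> 0 \<le> Mh_limit a b c \<and> Mh_limit a b c \<le> 1"
proof -
  assume a: "0 < a"
  have "a ^ (c - b) \<le> fact (c - b) * exp a" using a by (intro power_le_fact_mult_exp) simp
  then have "exp (- a) * (a ^ (c - b) / fact (c - b)) \<le> exp (- a) * exp a"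
    by (intro mult_left_mono) (auto simp: divide_le_eq mult.commute)
  then show ?thesis using a by (simp add: Mh_limit_def flip: exp_add)
qed

lemma tendsto_Mh_term:
  assumes k: "\<kappa> > 1"
  shows "((\<lambda>x. Mh_term (fst x) \<kappa> (snd x) b c l) \<longlongrightarrow>
     (if b \<le> c + l then exp (- a) * a ^ (c + l - b) / fact (c + l - b) * (real (b choose l) * 0 ^ l) else 0))
     (regime a)"
proof (cases "b \<le> c + l")
  case True
  have "((\<lambda>x. real ((fst x - b) choose (c + l - b)) * snd x ^ (c + l - b) * (1 - snd x) ^ (fst x - b - (c + l - b))
        * (real (b choose l) * (snd x / (\<kappa> - 1)) ^ l * (1 - snd x / (\<kappa> - 1)) ^ (b - l)))
     \<longlongrightarrow> exp (- a) * a ^ (c + l - b) / fact (c + l - b)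
        * (real (b choose l) * (0 / (\<kappa> - 1)) ^ l * (1 - 0 / (\<kappa> - 1)) ^ (b - l))) (regime a)"
    by (intro tendsto_mult tendsto_regime_binomial tendsto_const tendsto_power tendsto_divide tendsto_diff
        tendsto_regime_snd) (use k in auto)
  then show ?thesis using True by (simp add: Mh_term_def)
qed (simp add: Mh_term_def)

text \<open>Only the term \<open>l = 0\<close> survives, since the other ones carry a factor \<open>(q/(\<kappa>-1))\<^sup>l \<rightarrow> 0\<close>.\<close>
lemma tendsto_Mh:
  assumes k: "\<kappa> > 1"
  shows "((\<lambda>x. Mh (fst x) \<kappa> (snd x) b c) \<longlongrightarrow> Mh_limit a b c) (regime a)"
proof (rule Lim_transform_eventually)
  have "((\<lambda>x. \<Sum>l\<in>{0..b}. Mh_term (fst x) \<kappa> (snd x) b c l) \<longlongrightarrow>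
     (\<Sum>l\<in>{0..b}. if b \<le> c + l then exp (- a) * a ^ (c + l - b) / fact (c + l - b) * (real (b choose l) * 0 ^ l) else 0))
     (regime a)"
    by (intro tendsto_sum tendsto_Mh_term k)
  moreover have "(\<Sum>l\<in>{0..b}. if b \<le> c + l then exp (- a) * a ^ (c + l - b) / fact (c + l - b)
      * (real (b choose l) * 0 ^ l) else 0) = Mh_limit a b c"
  proof -
    have "{0..b} = insert 0 {1..b}" by auto
    moreover have "(\<Sum>l\<in>{1..b}. if b \<le> c + l then exp (- a) * a ^ (c + l - b) / fact (c + l - b)
        * (real (b choose l) * 0 ^ l) else 0) = (0::real)"
      by (intro sum.neutral) auto
    ultimately show ?thesis by (simp add: Mh_limit_def)
  qed
  ultimately show "((\<lambda>x. \<Sum>l\<in>{0..b}. Mh_term (fst x) \<kappa> (snd x) b c l) \<longlongrightarrow> Mh_limit a b c) (regime a)"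
    by simp
  show "eventually (\<lambda>x. (\<Sum>l\<in>{0..b}. Mh_term (fst x) \<kappa> (snd x) b c l) = Mh (fst x) \<kappa> (snd x) b c) (regime a)"
    by (rule eventually_mono[OF eventually_regime_fst_ge[of "b + c"]]) (auto simp: Mh_eq_sum_Mh_term[OF k])
qed

lemma eventually_Mh_close:
  assumes "\<kappa> > 1" "0 < e"
  shows "eventually (\<lambda>x. (\<forall>l\<le>k. \<bar>Mh (fst x) \<kappa> (snd x) l k - Mh_limit a l k\<bar> < e)
      \<and> \<bar>eps_theta (fst x) \<kappa> (snd x) k th\<bar> < e) (regime a)"
proof (intro eventually_conj)
  have "eventually (\<lambda>x. \<forall>l\<in>{..k}. \<bar>Mh (fst x) \<kappa> (snd x) l k - Mh_limit a l k\<bar> < e) (regime a)"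
    using tendstoD[OF tendsto_Mh[OF assms(1)] assms(2)] by (intro eventually_ball_finite) (auto simp: dist_real_def)
  then show "eventually (\<lambda>x. \<forall>l\<le>k. \<bar>Mh (fst x) \<kappa> (snd x) l k - Mh_limit a l k\<bar> < e) (regime a)"
    by (auto elim: eventually_mono)
qed (cases th; use tendstoD[OF tendsto_Mh[OF assms(1), of "k + 1" k a] assms(2)] assms(2) in
      \<open>auto simp: eps_theta_def dist_real_def Mh_limit_def\<close>)

section \<open>The rates of \<open>Z\<^sup>L\<close> and \<open>Z\<^sup>U\<close>\<close>

text \<open>\<open>\<delta>\<^sub>i(\<rho>) = (1 - x) F\<close> and \<open>\<gamma>\<^sub>i(\<rho>) = x (1 - F)\<close> at \<open>x = i/m\<close>, with
  \<open>F = birth_weight / D(\<rho>)\<close>; \<open>M\<close> stands for \<open>l \<mapsto> M\<^sub>H(l,k)\<close> and \<open>e\<close> for \<open>\<epsilon>\<^sub>\<theta>\<close>.\<close>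
definition birth_weight :: "real \<Rightarrow> nat \<Rightarrow> (nat \<Rightarrow> real) \<Rightarrow> (nat \<Rightarrow> real) \<Rightarrow> real \<Rightarrow> real \<Rightarrow> real" where
  "birth_weight \<sigma> k \<rho> M e x = \<sigma> * \<rho> 0 * M 0 + (\<Sum>l\<in>{1..k-1}. \<rho> l * M l) + x * M k + (1 - (\<Sum>l<k. \<rho> l) - x) * e"

definition birth_fraction :: "real \<Rightarrow> nat \<Rightarrow> (nat \<Rightarrow> real) \<Rightarrow> (nat \<Rightarrow> real) \<Rightarrow> real \<Rightarrow> real \<Rightarrow> real" where
  "birth_fraction \<sigma> k \<rho> M e x = birth_weight \<sigma> k \<rho> M e x / ((\<sigma> - 1) * \<rho> 0 + 1)"

lemma delta_fn_eq:
  "delta_fn \<sigma> \<kappa> L q m k th \<rho> i = (if i < m then (1 - real i / real m) *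
     birth_fraction \<sigma> k \<rho> (\<lambda>l. Mh L \<kappa> q l k) (eps_theta L \<kappa> q k th) (real i / real m) else 0)"
  by (simp add: delta_fn_def birth_fraction_def birth_weight_def)

lemma gamma_fn_eq:
  assumes k: "1 \<le> k" and D: "(\<sigma> - 1) * \<rho> 0 + 1 \<noteq> 0"
  shows "gamma_fn \<sigma> \<kappa> L q m k th \<rho> i = (if 0 < i then (real i / real m) *
     (1 - birth_fraction \<sigma> k \<rho> (\<lambda>l. Mh L \<kappa> q l k) (eps_theta L \<kappa> q k th) (real i / real m)) else 0)"
proof -
  define M where "M = (\<lambda>l. Mh L \<kappa> q l k)"
  define e where "e = eps_theta L \<kappa> q k th"
  define x where "x = real i / real m"
  define D where "D = (\<sigma> - 1) * \<rho> 0 + 1"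
  have "{..<k} = insert 0 {1..k-1}" using k by auto
  then have "\<sigma> * \<rho> 0 * (1 - M 0) + (\<Sum>l\<in>{1..k-1}. \<rho> l * (1 - M l)) + x * (1 - M k)
      + (1 - (\<Sum>l<k. \<rho> l) - x) * (1 - e) = D - birth_weight \<sigma> k \<rho> M e x"
    unfolding birth_weight_def D_def by (simp add: algebra_simps sum_subtractf)
  then have "gamma_fn \<sigma> \<kappa> L q m k th \<rho> i = (if 0 < i then x / D * (D - birth_weight \<sigma> k \<rho> M e x) else 0)"
    unfolding gamma_fn_def M_def e_def x_def D_def by simp
  also have "x / D * (D - birth_weight \<sigma> k \<rho> M e x) = x * (1 - birth_weight \<sigma> k \<rho> M e x / D)"
    using D by (simp add: D_def field_simps)
  finally show ?thesis by (simp add: birth_fraction_def M_def e_def x_def D_def)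
qed

lemma abs_mult_diff_le:
  fixes r rs M Ms e eM :: real
  assumes "\<bar>r\<bar> \<le> 1" "\<bar>Ms\<bar> \<le> 1" "\<bar>r - rs\<bar> \<le> e" "\<bar>M - Ms\<bar> \<le> eM"
  shows "\<bar>r * M - rs * Ms\<bar> \<le> e + eM"
proof -
  have "r * M - rs * Ms = r * (M - Ms) + (r - rs) * Ms" by (simp add: algebra_simps)
  also have "\<bar>\<dots>\<bar> \<le> \<bar>r\<bar> * \<bar>M - Ms\<bar> + \<bar>r - rs\<bar> * \<bar>Ms\<bar>" by (metis abs_mult abs_triangle_ineq)
  also have "\<bar>r\<bar> * \<bar>M - Ms\<bar> \<le> 1 * eM" using assms by (intro mult_mono) auto
  also have "\<bar>r - rs\<bar> * \<bar>Ms\<bar> \<le> e * 1" using assms by (intro mult_mono) auto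
  finally show ?thesis by simp
qed

lemma abs_divide_diff_le:
  fixes A As D Ds \<alpha> \<beta> \<sigma> B :: real
  assumes "1 \<le> D" "1 \<le> Ds" "Ds \<le> \<sigma>" "0 \<le> As" "As \<le> B" "\<bar>A - As\<bar> \<le> \<alpha>" "\<bar>D - Ds\<bar> \<le> \<beta>"
  shows "\<bar>A / D - As / Ds\<bar> \<le> \<alpha> * \<sigma> + B * \<beta>"
proof -
  have "\<bar>A / D - As / Ds\<bar> = \<bar>(A - As) * Ds - As * (D - Ds)\<bar> / (D * Ds)"
    using assms(1,2) by (simp add: field_simps abs_div)
  also have "\<dots> \<le> \<bar>(A - As) * Ds - As * (D - Ds)\<bar> / 1"
    using assms(1,2) mult_mono[of 1 D 1 Ds] by (intro divide_left_mono) auto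
  also have "\<dots> \<le> \<bar>A - As\<bar> * Ds + As * \<bar>D - Ds\<bar>"
    using abs_triangle_ineq4[of "(A - As) * Ds" "As * (D - Ds)"] assms(2,4) by (simp add: abs_mult)
  also have "\<dots> \<le> \<alpha> * \<sigma> + B * \<beta>"
    using assms by (intro add_mono mult_mono) auto
  finally show ?thesis .
qed

lemma birth_weight_perturbation:
  fixes \<rho> \<rho>s M Ms :: "nat \<Rightarrow> real" and \<sigma> x e eM \<epsilon> :: real and k :: nat
  assumes k: "1 \<le> k" and \<sigma>: "1 < \<sigma>" and x: "0 \<le> x" "x \<le> 1"
    and \<rho>: "\<And>i. i < k \<Longrightarrow> 0 \<le> \<rho> i \<and> \<rho> i \<le> 1"
    and \<rho>s: "\<And>i. i < k \<Longrightarrow> 0 \<le> \<rho>s i \<and> \<rho>s i \<le> 1"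
    and d\<rho>: "\<And>i. i < k \<Longrightarrow> \<bar>\<rho> i - \<rho>s i\<bar> \<le> e"
    and Ms: "\<And>l. l \<le> k \<Longrightarrow> 0 \<le> Ms l \<and> Ms l \<le> 1"
    and dM: "\<And>l. l \<le> k \<Longrightarrow> \<bar>M l - Ms l\<bar> \<le> eM"
    and d\<epsilon>: "\<bar>\<epsilon>\<bar> \<le> eM"
  shows "\<bar>birth_weight \<sigma> k \<rho> M \<epsilon> x - birth_weight \<sigma> k \<rho>s Ms 0 x\<bar> \<le> (\<sigma> + 2 * real k + 3) * (e + eM)"
proof -
  have e0: "0 \<le> e" using d\<rho>[of 0] k by linarith
  have eM0: "0 \<le> eM" using d\<epsilon> by linarith
  have prod: "\<bar>\<rho> l * M l - \<rho>s l * Ms l\<bar> \<le> e + eM" if "l < k" for l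
    using that \<rho> Ms d\<rho> dM by (intro abs_mult_diff_le) auto
  have t1: "\<bar>\<sigma> * \<rho> 0 * M 0 - \<sigma> * \<rho>s 0 * Ms 0\<bar> \<le> \<sigma> * (e + eM)"
    using prod[of 0] k \<sigma> by (simp add: abs_mult mult.assoc flip: right_diff_distrib)
  have "\<bar>(\<Sum>l\<in>{1..k-1}. \<rho> l * M l) - (\<Sum>l\<in>{1..k-1}. \<rho>s l * Ms l)\<bar> \<le> (\<Sum>l\<in>{1..k-1}. e + eM)"
    unfolding sum_subtractf[symmetric] by (rule order_trans[OF sum_abs sum_mono]) (use prod in auto)
  also have "\<dots> \<le> real k * (e + eM)" using e0 eM0 by (simp add: mult_right_mono)
  finally have t2: "\<bar>(\<Sum>l\<in>{1..k-1}. \<rho> l * M l) - (\<Sum>l\<in>{1..k-1}. \<rho>s l * Ms l)\<bar> \<le> real k * (e + eM)" .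
  have "\<bar>x * M k - x * Ms k\<bar> = x * \<bar>M k - Ms k\<bar>" using x by (simp add: abs_mult flip: right_diff_distrib)
  also have "\<dots> \<le> 1 * eM" using x dM[of k] by (intro mult_mono) auto
  finally have t3: "\<bar>x * M k - x * Ms k\<bar> \<le> e + eM" using e0 by simp
  have "\<bar>1 - (\<Sum>l<k. \<rho> l) - x\<bar> \<le> real k + 2"
    using x \<rho> sum_mono[of "{..<k}" \<rho> "\<lambda>_. 1"] sum_nonneg[of "{..<k}" \<rho>] by auto
  then have "\<bar>(1 - (\<Sum>l<k. \<rho> l) - x) * \<epsilon>\<bar> \<le> (real k + 2) * eM" unfolding abs_mult
    using d\<epsilon> by (intro mult_mono) auto
  then have t4: "\<bar>(1 - (\<Sum>l<k. \<rho> l) - x) * \<epsilon>\<bar> \<le> (real k + 2) * (e + eM)"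
    using e0 by (smt (verit) mult_left_mono of_nat_0_le_iff)
  have "\<bar>birth_weight \<sigma> k \<rho> M \<epsilon> x - birth_weight \<sigma> k \<rho>s Ms 0 x\<bar>
      \<le> \<sigma> * (e + eM) + real k * (e + eM) + (e + eM) + (real k + 2) * (e + eM)"
    using t1 t2 t3 t4 unfolding birth_weight_def by (simp add: abs_triangle_ineq)
  then show ?thesis by (simp add: algebra_simps)
qed

lemma birth_weight_bounds:
  assumes k: "1 \<le> k" and \<sigma>: "1 < \<sigma>" and x: "0 \<le> x" "x \<le> 1"
    and \<rho>s: "\<And>i. i < k \<Longrightarrow> 0 \<le> \<rho>s i \<and> \<rho>s i \<le> 1"
    and Ms: "\<And>l. l \<le> k \<Longrightarrow> 0 \<le> Ms l \<and> Ms l \<le> 1"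
  shows "0 \<le> birth_weight \<sigma> k \<rho>s Ms 0 x \<and> birth_weight \<sigma> k \<rho>s Ms 0 x \<le> \<sigma> + real k"
proof -
  have "\<rho>s 0 * Ms 0 \<le> 1" using \<rho>s[of 0] Ms[of 0] k by (intro mult_le_one) auto
  then have "\<sigma> * (\<rho>s 0 * Ms 0) \<le> \<sigma> * 1" using \<sigma> by (intro mult_left_mono) auto
  then have "\<sigma> * \<rho>s 0 * Ms 0 \<le> \<sigma>" by (simp add: mult.assoc)
  moreover have "0 \<le> \<sigma> * \<rho>s 0 * Ms 0" using \<rho>s[of 0] Ms[of 0] k \<sigma> by simp
  moreover have "(\<Sum>l\<in>{1..k-1}. \<rho>s l * Ms l) \<le> (\<Sum>l\<in>{1..k-1}. 1)"
    using \<rho>s Ms by (intro sum_mono) (auto intro: mult_le_one)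
  moreover have "(\<Sum>l\<in>{1..k-1}. 1) = real k - 1" using k by (simp add: of_nat_diff)
  moreover have "0 \<le> (\<Sum>l\<in>{1..k-1}. \<rho>s l * Ms l)" using \<rho>s Ms by (intro sum_nonneg) auto
  moreover have "x * Ms k \<le> 1" "0 \<le> x * Ms k" using x Ms[of k] by (auto intro: mult_le_one)
  ultimately show ?thesis unfolding birth_weight_def mult_zero_right add_0_right by linarith
qed

lemma birth_fraction_perturbation:
  fixes \<rho> \<rho>s M Ms :: "nat \<Rightarrow> real" and \<sigma> x e eM \<epsilon> :: real and k :: nat
  assumes k: "1 \<le> k" and \<sigma>: "1 < \<sigma>" and x: "0 \<le> x" "x \<le> 1"
    and \<rho>: "\<And>i. i < k \<Longrightarrow> 0 \<le> \<rho> i \<and> \<rho> i \<le> 1"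
    and \<rho>s: "\<And>i. i < k \<Longrightarrow> 0 \<le> \<rho>s i \<and> \<rho>s i \<le> 1"
    and d\<rho>: "\<And>i. i < k \<Longrightarrow> \<bar>\<rho> i - \<rho>s i\<bar> \<le> e"
    and Ms: "\<And>l. l \<le> k \<Longrightarrow> 0 \<le> Ms l \<and> Ms l \<le> 1"
    and dM: "\<And>l. l \<le> k \<Longrightarrow> \<bar>M l - Ms l\<bar> \<le> eM"
    and d\<epsilon>: "\<bar>\<epsilon>\<bar> \<le> eM"
  shows "\<bar>birth_fraction \<sigma> k \<rho> M \<epsilon> x - birth_fraction \<sigma> k \<rho>s Ms 0 x\<bar> \<le> 2 * \<sigma> * (\<sigma> + 2 * real k + 3) * (e + eM)"
proof -
  have e0: "0 \<le> e" using d\<rho>[of 0] k by linarith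
  have eM0: "0 \<le> eM" using d\<epsilon> by linarith
  have "\<bar>((\<sigma> - 1) * \<rho> 0 + 1) - ((\<sigma> - 1) * \<rho>s 0 + 1)\<bar> = (\<sigma> - 1) * \<bar>\<rho> 0 - \<rho>s 0\<bar>"
    using \<sigma> by (simp add: abs_mult flip: right_diff_distrib)
  also have "\<dots> \<le> \<sigma> * e" using d\<rho>[of 0] k \<sigma> e0 by (intro mult_mono) auto
  finally have dD: "\<bar>((\<sigma> - 1) * \<rho> 0 + 1) - ((\<sigma> - 1) * \<rho>s 0 + 1)\<bar> \<le> \<sigma> * e" .
  have "(\<sigma> - 1) * \<rho>s 0 \<le> (\<sigma> - 1) * 1" using \<rho>s[of 0] k \<sigma> by (intro mult_left_mono) auto
  then have Ds_le: "(\<sigma> - 1) * \<rho>s 0 + 1 \<le> \<sigma>" by simp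
  have "\<bar>birth_fraction \<sigma> k \<rho> M \<epsilon> x - birth_fraction \<sigma> k \<rho>s Ms 0 x\<bar>
      \<le> (\<sigma> + 2 * real k + 3) * (e + eM) * \<sigma> + (\<sigma> + real k) * (\<sigma> * e)"
    unfolding birth_fraction_def using \<rho>[of 0] \<rho>s[of 0] k \<sigma> dD Ds_le
      birth_weight_perturbation[OF assms] birth_weight_bounds[OF k \<sigma> x \<rho>s Ms]
    by (intro abs_divide_diff_le) auto
  also have "\<dots> \<le> 2 * \<sigma> * (\<sigma> + 2 * real k + 3) * (e + eM)"
  proof -
    have "(\<sigma> + real k) * (\<sigma> * e) \<le> (\<sigma> + 2 * real k + 3) * (\<sigma> * (e + eM))"
      using \<sigma> e0 eM0 by (intro mult_mono) auto
    then show ?thesis by (simp add: algebra_simps)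
  qed
  finally show ?thesis .
qed

definition limit_fraction :: "real \<Rightarrow> real \<Rightarrow> real \<Rightarrow> real" where
  "limit_fraction \<sigma> c x = (c * (\<sigma> - 1) + x) / \<sigma>"

lemma limit_fraction_margins:
  assumes s: "\<sigma> > 1" and "\<epsilon> \<le> (\<sigma> - 1) * c / \<sigma>" "\<epsilon> \<le> (\<sigma> - 1) * (1 - c) / \<sigma>" "0 \<le> x" "x \<le> 1"
  shows "\<epsilon> \<le> limit_fraction \<sigma> c x \<and> \<epsilon> \<le> 1 - limit_fraction \<sigma> c x"
proof -
  have "(\<sigma> - 1) * c / \<sigma> \<le> (c * (\<sigma> - 1) + x) / \<sigma>" "(c * (\<sigma> - 1) + x) / \<sigma> \<le> (c * (\<sigma> - 1) + 1) / \<sigma>"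
    using assms by (intro divide_right_mono; simp add: algebra_simps)+
  moreover have "1 - (c * (\<sigma> - 1) + 1) / \<sigma> = (\<sigma> - 1) * (1 - c) / \<sigma>" using s by (simp add: field_simps)
  ultimately show ?thesis using assms unfolding limit_fraction_def by (intro conjI; linarith)
qed

lemma limit_fraction_drift: "\<sigma> \<noteq> 0 \<Longrightarrow> limit_fraction \<sigma> c x - x = (\<sigma> - 1) * (c - x) / \<sigma>"
  by (simp add: limit_fraction_def field_simps)

lemma birth_fraction_limit:
  assumes a: "a > 0" and sa: "\<sigma> * exp (- a) > 1" and k: "1 \<le> k"
  shows "birth_fraction \<sigma> k (rho_star \<sigma> a) (\<lambda>l. Mh_limit a l k) 0 x = limit_fraction \<sigma> (rho_star \<sigma> a k) x"
proof -
  have s: "\<sigma> > 1" by (rule gt_one_if_mult_exp_neg_gt_one[OF a sa])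
  have "(\<Sum>l\<in>{1..k-1}. rho_star \<sigma> a l * Mh_limit a l k)
      = exp (- a) * (\<Sum>l\<in>{1..k-1}. rho_star \<sigma> a l * (a ^ (k - l) / fact (k - l)))"
    unfolding sum_distrib_left by (rule sum.cong) (auto simp: Mh_limit_def)
  then have "birth_weight \<sigma> k (rho_star \<sigma> a) (\<lambda>l. Mh_limit a l k) 0 x
      = exp (- a) * (\<sigma> * rho_star \<sigma> a 0 * (a ^ k / fact k)
         + (\<Sum>l\<in>{1..k-1}. rho_star \<sigma> a l * (a ^ (k - l) / fact (k - l)))) + x * exp (- a)"
    by (simp add: birth_weight_def Mh_limit_def algebra_simps)
  also have "\<dots> = exp (- a) * (rho_star \<sigma> a k * (\<sigma> - 1) + x)"
    by (simp only: rho_star_fixed_point[OF s k]) (simp add: algebra_simps)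
  finally show ?thesis
    using s by (simp add: birth_fraction_def limit_fraction_def rho_star_0)
qed

lemma rates_near_limit:
  fixes \<sigma> a \<kappa> q \<delta>' eM \<epsilon> :: real and L m k i :: nat and th \<rho>
  assumes a: "a > 0" and sa: "\<sigma> * exp (- a) > 1" and k: "1 \<le> k" and m: "1 \<le> m" and i: "i \<le> m"
    and W: "\<rho> \<in> Wset \<sigma> a k \<delta>'"
    and dM: "\<And>l. l \<le> k \<Longrightarrow> \<bar>Mh L \<kappa> q l k - Mh_limit a l k\<bar> \<le> eM"
    and d\<epsilon>: "\<bar>eps_theta L \<kappa> q k th\<bar> \<le> eM"
    and small: "2 * \<sigma> * (\<sigma> + 2 * real k + 3) * (2 * \<delta>' + eM) \<le> \<epsilon>"
  defines "x \<equiv> real i / real m" and "r \<equiv> limit_fraction \<sigma> (rho_star \<sigma> a k) (real i / real m)"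
  shows "\<bar>delta_fn \<sigma> \<kappa> L q m k th \<rho> i - (1 - x) * r\<bar> \<le> (1 - x) * \<epsilon>
    \<and> \<bar>gamma_fn \<sigma> \<kappa> L q m k th \<rho> i - x * (1 - r)\<bar> \<le> x * \<epsilon>"
proof -
  define F where "F = birth_fraction \<sigma> k \<rho> (\<lambda>l. Mh L \<kappa> q l k) (eps_theta L \<kappa> q k th) x"
  have s: "\<sigma> > 1" by (rule gt_one_if_mult_exp_neg_gt_one[OF a sa])
  have x: "0 \<le> x" "x \<le> 1" using i m by (auto simp: x_def divide_le_eq)
  have \<rho>: "\<And>j. j < k \<Longrightarrow> 0 \<le> \<rho> j \<and> \<rho> j \<le> 1"
    and d\<rho>: "\<And>j. j < k \<Longrightarrow> \<bar>\<rho> j - rho_star \<sigma> a j\<bar> \<le> 2 * \<delta>'"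
    using W by (auto simp: Wset_def less_imp_le)
  have \<rho>s: "\<And>j. j < k \<Longrightarrow> 0 \<le> rho_star \<sigma> a j \<and> rho_star \<sigma> a j \<le> 1"
    using rho_star_pos[OF a sa] rho_star_le_1[OF a sa] less_imp_le by blast
  have "\<bar>F - birth_fraction \<sigma> k (rho_star \<sigma> a) (\<lambda>l. Mh_limit a l k) 0 x\<bar>
      \<le> 2 * \<sigma> * (\<sigma> + 2 * real k + 3) * (2 * \<delta>' + eM)"
    unfolding F_def
    by (rule birth_fraction_perturbation[OF k s x \<rho> \<rho>s d\<rho> _ dM d\<epsilon>]) (use Mh_limit_bounds[OF a] in auto)
  then have "\<bar>F - r\<bar> \<le> 2 * \<sigma> * (\<sigma> + 2 * real k + 3) * (2 * \<delta>' + eM)"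
    by (simp add: r_def x_def birth_fraction_limit[OF a sa k])
  then have close: "\<bar>F - r\<bar> \<le> \<epsilon>" using small by linarith
  have "0 \<le> (\<sigma> - 1) * \<rho> 0" using \<rho>[of 0] k s by simp
  then have D: "(\<sigma> - 1) * \<rho> 0 + 1 \<noteq> 0" by linarith
  have "\<bar>(1 - x) * F - (1 - x) * r\<bar> = (1 - x) * \<bar>F - r\<bar>"
    using x by (simp add: abs_mult flip: right_diff_distrib)
  also have "\<dots> \<le> (1 - x) * \<epsilon>" using close x by (intro mult_left_mono) auto
  finally have birth: "\<bar>(1 - x) * F - (1 - x) * r\<bar> \<le> (1 - x) * \<epsilon>" .
  have "\<bar>x * (1 - F) - x * (1 - r)\<bar> = x * \<bar>F - r\<bar>"
    using x by (simp add: abs_mult abs_minus_commute flip: right_diff_distrib)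
  also have "\<dots> \<le> x * \<epsilon>" using close x by (intro mult_left_mono) auto
  finally have death: "\<bar>x * (1 - F) - x * (1 - r)\<bar> \<le> x * \<epsilon>" .
  have "delta_fn \<sigma> \<kappa> L q m k th \<rho> i = (if i < m then (1 - x) * F else 0)"
    unfolding delta_fn_eq F_def x_def ..
  moreover have "gamma_fn \<sigma> \<kappa> L q m k th \<rho> i = (if 0 < i then x * (1 - F) else 0)"
    unfolding gamma_fn_eq[where \<sigma> = \<sigma> and \<rho> = \<rho>, OF k D] F_def x_def ..
  moreover have "\<not> i < m \<Longrightarrow> 1 - x = 0" "\<not> 0 < i \<Longrightarrow> x = 0" using i m by (auto simp: x_def)
  ultimately show ?thesis using birth death by auto
qed

lemma Sup_Inf_image_near:
  fixes f :: "'b \<Rightarrow> real"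
  assumes "W \<noteq> {}" and near: "\<And>w. w \<in> W \<Longrightarrow> \<bar>f w - t\<bar> \<le> e"
  shows "\<bar>Sup (f ` W) - t\<bar> \<le> e \<and> \<bar>Inf (f ` W) - t\<bar> \<le> e"
proof -
  obtain w where w: "w \<in> W" using assms by auto
  have bnd: "t - e \<le> f v \<and> f v \<le> t + e" if "v \<in> W" for v using near[OF that] by linarith
  have "bdd_above (f ` W)" "bdd_below (f ` W)"
    using bnd by (auto intro: bdd_aboveI2[of W f "t + e"] bdd_belowI2[of W "t - e" f])
  then have "f w \<le> Sup (f ` W)" "Inf (f ` W) \<le> f w" using w by (auto intro: cSup_upper cInf_lower)
  moreover have "Sup (f ` W) \<le> t + e" "t - e \<le> Inf (f ` W)"
    using assms bnd by (auto intro: cSup_least cInf_greatest)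
  ultimately show ?thesis using bnd[OF w] by auto
qed

lemma Z_rates_near_limit:
  fixes \<sigma> a \<kappa> q \<delta>' eM \<epsilon> :: real and L m k i :: nat and th and upper :: bool
  assumes a: "a > 0" and sa: "\<sigma> * exp (- a) > 1" and k: "1 \<le> k" and m: "1 \<le> m" and i: "i \<le> m"
    and \<delta>': "\<delta>' > 0"
    and dM: "\<And>l. l \<le> k \<Longrightarrow> \<bar>Mh L \<kappa> q l k - Mh_limit a l k\<bar> \<le> eM"
    and d\<epsilon>: "\<bar>eps_theta L \<kappa> q k th\<bar> \<le> eM"
    and small: "2 * \<sigma> * (\<sigma> + 2 * real k + 3) * (2 * \<delta>' + eM) \<le> \<epsilon>"
  defines "x \<equiv> real i / real m" and "r \<equiv> limit_fraction \<sigma> (rho_star \<sigma> a k) (real i / real m)"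
  shows "\<bar>Zup \<sigma> a \<kappa> L q m k th \<delta>' upper i - (1 - x) * r\<bar> \<le> (1 - x) * \<epsilon>
    \<and> \<bar>Zdn \<sigma> a \<kappa> L q m k th \<delta>' upper i - x * (1 - r)\<bar> \<le> x * \<epsilon>"
proof -
  have "(\<lambda>j. if j < k then rho_star \<sigma> a j else 0) \<in> Wset \<sigma> a k \<delta>'"
    using rho_star_pos[OF a sa] rho_star_le_1[OF a sa] \<delta>' by (auto simp: Wset_def less_imp_le)
  then have W: "Wset \<sigma> a k \<delta>' \<noteq> {}" by blast
  note near = rates_near_limit[OF a sa k m i _ dM d\<epsilon> small, folded x_def r_def]
  show ?thesis
    using Sup_Inf_image_near[OF W, of "\<lambda>\<rho>. delta_fn \<sigma> \<kappa> L q m k th \<rho> i"]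
      Sup_Inf_image_near[OF W, of "\<lambda>\<rho>. gamma_fn \<sigma> \<kappa> L q m k th \<rho> i"] near
    by (cases upper) (simp_all add: Zup_def Zdn_def deltaU_def deltaL_def gammaU_def gammaL_def)
qed

text \<open>Near their limits the rates drift towards \<open>c\<close>: the drift \<open>\<delta> - \<gamma>\<close> is close to
  \<open>limit_fraction \<sigma> c x - x = (\<sigma> - 1)(c - x)/\<sigma>\<close>.\<close>
lemma drifting_chain_if_rates_near_limit:
  fixes up dn :: "nat \<Rightarrow> real"
  assumes m: "1 \<le> m" and s: "\<sigma> > 1" and c: "0 \<le> c" "c \<le> 1" and \<delta>: "0 < \<delta>" and \<mu>: "0 < \<mu>" "\<mu> \<le> 1"
    and near: "\<And>i. i \<le> m \<Longrightarrow>
      \<bar>up i - (1 - real i / real m) * limit_fraction \<sigma> c (real i / real m)\<bar> \<le> (1 - real i / real m) * \<epsilon>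
      \<and> \<bar>dn i - real i / real m * (1 - limit_fraction \<sigma> c (real i / real m))\<bar> \<le> real i / real m * \<epsilon>"
    and \<epsilon>1: "\<epsilon> \<le> (\<sigma> - 1) * c / \<sigma>" and \<epsilon>2: "\<epsilon> \<le> (\<sigma> - 1) * (1 - c) / \<sigma>"
    and \<mu>\<delta>: "\<mu> \<le> (\<sigma> - 1) * \<delta> / \<sigma> - \<epsilon>"
  shows "drifting_chain up dn m c \<delta> \<mu>"
proof
  have mp: "real m > 0" using m by simp
  define r where "r = limit_fraction \<sigma> c"
  have I: "(1 - x) * (r x - \<epsilon>) \<le> up i \<and> up i \<le> (1 - x) * (r x + \<epsilon>)
      \<and> x * (1 - r x - \<epsilon>) \<le> dn i \<and> dn i \<le> x * (1 - r x + \<epsilon>)" if i: "i \<le> m" and x: "x = real i / real m" for i x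
    using near[OF i] unfolding x[symmetric] r_def[symmetric] by (auto simp: abs_le_iff algebra_simps)
  show "0 \<le> up i \<and> 0 \<le> dn i \<and> up i + dn i \<le> 1" if i: "i \<le> m" for i
  proof -
    define x where "x = real i / real m"
    have x: "0 \<le> x" "x \<le> 1" using i mp by (auto simp: x_def divide_le_eq)
    then have margins: "\<epsilon> \<le> r x" "\<epsilon> \<le> 1 - r x"
      using limit_fraction_margins[OF s \<epsilon>1 \<epsilon>2] by (auto simp: r_def)
    then have "0 \<le> (1 - x) * (r x - \<epsilon>)" "0 \<le> x * (1 - r x - \<epsilon>)" using x by simp_all
    moreover have "(1 - x) * r x \<le> (1 - x) * (1 - \<epsilon>)" "x * (1 - r x) \<le> x * (1 - \<epsilon>)"
      using x margins by (intro mult_left_mono; simp)+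
    then have "(1 - x) * (r x + \<epsilon>) + x * (1 - r x + \<epsilon>) \<le> 1" by (simp add: algebra_simps)
    ultimately show ?thesis using I[OF i x_def] by linarith
  qed
  show "up m = 0" "dn 0 = 0" using I[of m 1] I[of 0 0] mp by auto
  show "\<mu> \<le> dn i - up i" if i: "i \<le> m" and far: "c + \<delta> \<le> real i / real m" for i
  proof -
    define x where "x = real i / real m"
    have "(\<sigma> - 1) * \<delta> / \<sigma> \<le> (\<sigma> - 1) * (x - c) / \<sigma>"
      using far s by (intro divide_right_mono mult_left_mono) (auto simp: x_def)
    moreover have "x * (1 - r x - \<epsilon>) - (1 - x) * (r x + \<epsilon>) = x - r x - \<epsilon>" by (simp add: algebra_simps)
    moreover have "x - r x = (\<sigma> - 1) * (x - c) / \<sigma>"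
      using limit_fraction_drift[of \<sigma> c x] s by (simp add: r_def field_simps)
    ultimately show ?thesis using I[OF i x_def] \<mu>\<delta> by linarith
  qed
  show "\<mu> \<le> up i - dn i" if i: "i \<le> m" and far: "real i / real m \<le> c - \<delta>" for i
  proof -
    define x where "x = real i / real m"
    have "(\<sigma> - 1) * \<delta> / \<sigma> \<le> (\<sigma> - 1) * (c - x) / \<sigma>"
      using far s by (intro divide_right_mono mult_left_mono) (auto simp: x_def)
    moreover have "(1 - x) * (r x - \<epsilon>) - x * (1 - r x + \<epsilon>) = r x - x - \<epsilon>" by (simp add: algebra_simps)
    ultimately show ?thesis using I[OF i x_def] limit_fraction_drift[of \<sigma> c x] s \<mu>\<delta> by (simp add: r_def)
  qed
qed (use assms in auto)

lemma Z_drifting_chain_eventually: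
  assumes a: "a > 0" and sa: "\<sigma> * exp (- a) > 1" and \<kappa>: "\<kappa> \<ge> 2" and k: "1 \<le> k" and \<delta>: "0 < \<delta>"
  obtains \<delta>0 \<mu> :: real and N :: nat and \<eta> :: real
  where "0 < \<delta>0" "0 < \<mu>" "\<mu> \<le> 1" "0 < \<eta>"
    and "\<And>\<delta>' L m q upper. 0 < \<delta>' \<Longrightarrow> \<delta>' < \<delta>0 \<Longrightarrow> N \<le> L \<Longrightarrow> 1 \<le> m \<Longrightarrow> 0 < q \<Longrightarrow> q < \<eta>
      \<Longrightarrow> \<bar>real L * q - a\<bar> < \<eta> \<Longrightarrow>
      drifting_chain (Zup \<sigma> a (real \<kappa>) L q m k th \<delta>' upper) (Zdn \<sigma> a (real \<kappa>) L q m k th \<delta>' upper)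
        m (rho_star \<sigma> a k) \<delta> \<mu>"
proof -
  have s: "\<sigma> > 1" by (rule gt_one_if_mult_exp_neg_gt_one[OF a sa])
  define c where "c = rho_star \<sigma> a k"
  have c: "0 < c" "c < 1" using rho_star_pos[OF a sa] rho_star_lt_1[OF a sa k] by (auto simp: c_def)
  define \<kappa>1 where "\<kappa>1 = (\<sigma> - 1) / \<sigma>"
  define t where "t = min \<delta> (min c (1 - c)) / 2"
  define \<epsilon> where "\<epsilon> = \<kappa>1 * t"
  have "0 < \<kappa>1" using s by (simp add: \<kappa>1_def)
  moreover have "0 < t" "t \<le> c" "t \<le> 1 - c" "t \<le> \<delta> / 2" using c \<delta> by (auto simp: t_def)
  ultimately have \<epsilon>: "0 < \<epsilon>" "\<epsilon> \<le> \<kappa>1 * c" "\<epsilon> \<le> \<kappa>1 * (1 - c)" "\<epsilon> \<le> \<kappa>1 * (\<delta> / 2)"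
    unfolding \<epsilon>_def by (auto intro: mult_left_mono)
  define K0 where "K0 = 2 * \<sigma> * (\<sigma> + 2 * real k + 3)"
  have K0: "0 < K0" using s by (simp add: K0_def)
  define eM where "eM = \<epsilon> / (2 * K0)"
  have eM: "0 < eM" using \<epsilon> K0 by (simp add: eM_def)
  define \<mu> where "\<mu> = min 1 (\<kappa>1 * (\<delta> / 2))"
  define d where "d = \<kappa>1 * (\<delta> / 2)"
  have "\<mu> \<le> d" "(\<sigma> - 1) * \<delta> / \<sigma> = 2 * d" by (simp_all add: \<mu>_def d_def \<kappa>1_def)
  then have \<mu>\<delta>: "\<mu> \<le> (\<sigma> - 1) * \<delta> / \<sigma> - \<epsilon>" using \<epsilon>(4) unfolding d_def[symmetric] by linarith
  have \<mu>: "0 < \<mu>" "\<mu> \<le> 1" using \<open>0 < \<kappa>1\<close> \<delta> by (simp_all add: \<mu>_def)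
  have "\<exists>N. \<exists>\<eta>>0. \<forall>L q. N \<le> L \<and> 0 < q \<and> q < \<eta> \<and> \<bar>real L * q - a\<bar> < \<eta> \<longrightarrow>
      (\<forall>l\<le>k. \<bar>Mh L (real \<kappa>) q l k - Mh_limit a l k\<bar> < eM) \<and> \<bar>eps_theta L (real \<kappa>) q k th\<bar> < eM"
    using eventually_regimeD[OF eventually_Mh_close[of "real \<kappa>" eM k a th]] \<kappa> eM by simp
  then obtain N \<eta> where \<eta>: "0 < \<eta>" and close: "\<And>L q. N \<le> L \<Longrightarrow> 0 < q \<Longrightarrow> q < \<eta> \<Longrightarrow> \<bar>real L * q - a\<bar> < \<eta> \<Longrightarrow>
      (\<forall>l\<le>k. \<bar>Mh L (real \<kappa>) q l k - Mh_limit a l k\<bar> < eM) \<and> \<bar>eps_theta L (real \<kappa>) q k th\<bar> < eM"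
    by blast
  show ?thesis
  proof (rule that[of "eM / 2" \<mu> \<eta> N])
    fix \<delta>' q :: real and L m :: nat and upper :: bool assume \<delta>': "0 < \<delta>'" "\<delta>' < eM / 2"
      and H: "N \<le> L" "1 \<le> m" "0 < q" "q < \<eta>" "\<bar>real L * q - a\<bar> < \<eta>"
    have "K0 * (2 * \<delta>' + eM) \<le> K0 * (2 * eM)" using \<delta>' K0 by (intro mult_left_mono) auto
    also have "\<dots> = \<epsilon>" using K0 by (simp add: eM_def)
    finally have small: "2 * \<sigma> * (\<sigma> + 2 * real k + 3) * (2 * \<delta>' + eM) \<le> \<epsilon>"
      by (simp only: K0_def)
    have dM: "\<And>l. l \<le> k \<Longrightarrow> \<bar>Mh L (real \<kappa>) q l k - Mh_limit a l k\<bar> \<le> eM"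
      and d\<epsilon>: "\<bar>eps_theta L (real \<kappa>) q k th\<bar> \<le> eM"
      using close[OF H(1,3-5)] by (auto intro: less_imp_le)
    show "drifting_chain (Zup \<sigma> a (real \<kappa>) L q m k th \<delta>' upper) (Zdn \<sigma> a (real \<kappa>) L q m k th \<delta>' upper)
        m (rho_star \<sigma> a k) \<delta> \<mu>"
      unfolding c_def[symmetric]
      using H s c \<delta> \<mu> \<mu>\<delta> \<epsilon>[unfolded \<kappa>1_def] Z_rates_near_limit[OF a sa k H(2) _ \<delta>'(1) dM d\<epsilon> small]
      by (intro drifting_chain_if_rates_near_limit) (auto simp: c_def)
  qed (use eM \<mu> \<eta> in auto)
qed

theorem mainTheorem9:
  fixes \<sigma> a :: real and \<kappa> K k :: nat and th :: theta_mode
  assumes "a > 0" and "\<sigma> * exp (- a) > 1" and "\<kappa> \<ge> 2"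
    and "1 \<le> k" and "k \<le> K"
  shows "\<forall>\<delta>>0. \<exists>\<delta>0>0. \<forall>\<delta>'. 0 < \<delta>' \<and> \<delta>' < \<delta>0 \<longrightarrow>
    (\<exists>\<alpha> \<alpha>' \<beta> \<beta>'. \<alpha> > 0 \<and> \<alpha>' > 0 \<and> \<beta> > 0 \<and> \<beta>' > 0 \<and>
      (\<exists>N. \<exists>\<eta>>0. \<forall>L m q. N \<le> L \<and> N \<le> m \<and> 0 < q \<and> q < \<eta> \<and> \<bar>real L * q - a\<bar> < \<eta> \<longrightarrow>
        (\<forall>upper::bool.
          (\<forall>i\<le>m. prob_tau_ge (Zup \<sigma> a (real \<kappa>) L q m k th \<delta>' upper) (Zdn \<sigma> a (real \<kappa>) L q m k th \<delta>' upper)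
                     (Vk \<sigma> a m k \<delta>) (real m powr \<alpha>) i \<le> exp (- \<alpha>' * real m)) \<and>
          (\<forall>i\<in>Vk \<sigma> a m k \<delta>. prob_tau_le (Zup \<sigma> a (real \<kappa>) L q m k th \<delta>' upper) (Zdn \<sigma> a (real \<kappa>) L q m k th \<delta>' upper)
                     ({0..m} - Vk \<sigma> a m k (2 * \<delta>)) (exp (\<beta> * real m)) i \<le> exp (- \<beta>' * real m)))))"
proof (intro allI impI, goal_cases)
  case (1 \<delta>)
  obtain \<delta>0 \<mu> :: real and N :: nat and \<eta> :: real where "0 < \<delta>0" "0 < \<mu>" "0 < \<eta>"
    and chain: "\<And>\<delta>' L m q upper. 0 < \<delta>' \<Longrightarrow> \<delta>' < \<delta>0 \<Longrightarrow> N \<le> L \<Longrightarrow> 1 \<le> m \<Longrightarrow> 0 < q \<Longrightarrow> q < \<eta>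
      \<Longrightarrow> \<bar>real L * q - a\<bar> < \<eta> \<Longrightarrow>
      drifting_chain (Zup \<sigma> a (real \<kappa>) L q m k th \<delta>' upper) (Zdn \<sigma> a (real \<kappa>) L q m k th \<delta>' upper)
        m (rho_star \<sigma> a k) \<delta> \<mu>"
    using Z_drifting_chain_eventually[OF assms(1-4) 1] by metis
  define Nm where "Nm = max N (max 1 (hitting_threshold \<delta> \<mu>))"
  have bounds:
    "(\<forall>i\<le>m. prob_tau_ge (Zup \<sigma> a (real \<kappa>) L q m k th \<delta>' upper) (Zdn \<sigma> a (real \<kappa>) L q m k th \<delta>' upper)
         (Vk \<sigma> a m k \<delta>) (real m powr 2) i \<le> exp (- 1 * real m)) \<and>
     (\<forall>i\<in>Vk \<sigma> a m k \<delta>. prob_tau_le (Zup \<sigma> a (real \<kappa>) L q m k th \<delta>' upper) (Zdn \<sigma> a (real \<kappa>) L q m k th \<delta>' upper)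
         ({0..m} - Vk \<sigma> a m k (2 * \<delta>)) (exp (\<mu> * \<delta> / 8 * real m)) i \<le> exp (- (\<mu> * \<delta> / 4) * real m))"
    if "0 < \<delta>'" "\<delta>' < \<delta>0" "Nm \<le> L \<and> Nm \<le> m \<and> 0 < q \<and> q < \<eta> \<and> \<bar>real L * q - a\<bar> < \<eta>"
    for \<delta>' L m q upper
    unfolding Vk_def using drifting_chain.hitting_time_bounds[OF chain] that by (simp add: Nm_def)
  show ?case
    by (rule exI[of _ \<delta>0], intro conjI allI impI \<open>0 < \<delta>0\<close>, rule exI[of _ 2], rule exI[of _ 1],
        rule exI[of _ "\<mu> * \<delta> / 8"], rule exI[of _ "\<mu> * \<delta> / 4"], intro conjI exI[of _ Nm] exI[of _ \<eta>] allI impI)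
      (use bounds \<open>0 < \<eta>\<close> \<open>0 < \<mu>\<close> \<open>0 < \<delta>\<close> in auto)
qed

end
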